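(* Let $(x^*,s^* )$ be a KKT pair of (P) ($\nabla f(x^* )-\nabla c(x^* )s^*=0$, $c(x^* )\ge0$, $s^*\ge0$, $(s^* )^Tc(x^* )=0$). Assume: $f$ and $c_i$ are twice differentiable on $\mathbb{R}^n$ with second derivatives Lipschitz continuous in a neighborhood of $x^*$; the gradients $\nabla c_i(x^* )$, $i\in\{i:c_i(x^* )=0\}$, are linearly independent; strict complementarity $s^*+c(x^* )>0$ holds; and for a fixed $\rho_0>0$ the matrix $$B^*=\nabla^2f(x^* )-\sum_{i=1}^m s_i^*\nabla^2c_i(x^* )+\rho_0\sum_{i:\,s_i^*>0}\nabla c_i(x^* )\nabla c_i(x^* )^T$$ is positive definite. Then there exist positive scalars $\bar\mu,\varepsilon,\delta$ such that for all $(s,\mu)\in D=\{(s,\mu):\|s-s^*\|\le\delta,\ \mu\in[0,\bar\mu)\}$ the problem $\min\{F(x,s;\mu,\rho_0):\|x-x^*\|<\varepsilon\}$ has a unique solution $x(s;\mu)$; the map $(s,\mu)\mapsto x(s;\mu)$ is continuously differentiable in the interior of $D$; and there is a constant $C>0$ such that for all $(s,\mu)\in D$, $$\|x(s;\mu)-x^*\|\le C(\|s-s^*\|+\mu),\qquad \|\tilde s(s;\mu)-s^*\|\le C(\|s-s^*\|+\mu),$$ where $\tilde s(s;\mu)=\rho_0\,y(x(s;\mu),s;\mu,\rho_0)$.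
   Context: Problem (P): $\min f(x)$ s.t. $c(x)\ge0$, with $f:\mathbb{R}^n\to\mathbb{R}$, $c=(c_1,\dots,c_m):\mathbb{R}^n\to\mathbb{R}^m$; $\nabla c(x)\in\mathbb{R}^{n\times m}$ has $i$-th column $\nabla c_i(x)$. For $\mu\ge0$, $\rho>0$, $x\in\mathbb{R}^n$, $s\in\mathbb{R}^m$ define $z_i(x,s;\mu,\rho)=\frac{1}{2\rho}\big(\sqrt{(s_i-\rho c_i(x))^2+4\rho\mu}-(s_i-\rho c_i(x))\big)$, $y_i(x,s;\mu,\rho)=\frac{1}{2\rho}\big(\sqrt{(s_i-\rho c_i(x))^2+4\rho\mu}+(s_i-\rho c_i(x))\big)$, $h_i(x,s;\mu,\rho)=-\mu\ln z_i(x,s;\mu,\rho)+\frac{\rho}{2}y_i(x,s;\mu,\rho)^2-\frac{1}{2\rho}s_i^2$ (for $\mu=0$ the term $-\mu\ln z_i$ is omitted), and $F(x,s;\mu,\rho)=f(x)+\sum_{i=1}^m h_i(x,s;\mu,\rho)$; $y=(y_i)$. $\|\cdot\|$ is the Euclidean norm. *)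

theory Defs
  imports "HOL-Analysis.Analysis"
begin

definition zfun :: "(real^'n \<Rightarrow> real^'m) \<Rightarrow> real^'n \<Rightarrow> real^'m \<Rightarrow> real \<Rightarrow> real \<Rightarrow> 'm \<Rightarrow> real" where
  "zfun c x s \<mu> \<rho> i = (1 / (2*\<rho>)) *
     (sqrt ((s$i - \<rho> * c x $ i)^2 + 4*\<rho>*\<mu>) - (s$i - \<rho> * c x $ i))"

definition yfun :: "(real^'n \<Rightarrow> real^'m) \<Rightarrow> real^'n \<Rightarrow> real^'m \<Rightarrow> real \<Rightarrow> real \<Rightarrow> 'm \<Rightarrow> real" where
  "yfun c x s \<mu> \<rho> i = (1 / (2*\<rho>)) *
     (sqrt ((s$i - \<rho> * c x $ i)^2 + 4*\<rho>*\<mu>) + (s$i - \<rho> * c x $ i))"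

definition hfun :: "(real^'n \<Rightarrow> real^'m) \<Rightarrow> real^'n \<Rightarrow> real^'m \<Rightarrow> real \<Rightarrow> real \<Rightarrow> 'm \<Rightarrow> real" where
  "hfun c x s \<mu> \<rho> i =
     (if \<mu> = 0 then 0 else - \<mu> * ln (zfun c x s \<mu> \<rho> i))
     + \<rho> / 2 * (yfun c x s \<mu> \<rho> i)^2 - 1 / (2*\<rho>) * (s$i)^2"

definition Ffun :: "(real^'n \<Rightarrow> real) \<Rightarrow> (real^'n \<Rightarrow> real^'m) \<Rightarrow> real^'n \<Rightarrow> real^'m \<Rightarrow> real \<Rightarrow> real \<Rightarrow> real" where
  "Ffun f c x s \<mu> \<rho> = f x + (\<Sum>i\<in>UNIV. hfun c x s \<mu> \<rho> i)"

definition yvec :: "(real^'n \<Rightarrow> real^'m) \<Rightarrow> real^'n \<Rightarrow> real^'m \<Rightarrow> real \<Rightarrow> real \<Rightarrow> real^'m" where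
  "yvec c x s \<mu> \<rho> = (\<chi> i. yfun c x s \<mu> \<rho> i)"

definition outer :: "real^'n \<Rightarrow> real^'n^'n" where
  "outer u = (\<chi> j k. u$j * u$k)"

end

theory Submission
  imports Defs
begin

text \<open>Write \<open>t\<^sub>i = s\<^sub>i - \<rho> c\<^sub>i(x)\<close>. Then \<open>\<rho> y\<^sub>i = \<phi>(t\<^sub>i, \<mu>)\<close> with
  \<open>\<phi>(t, \<mu>) = (sqrt (t\<^sup>2 + 4\<rho>\<mu>) + t) / 2\<close>, a smoothing of \<open>max t 0\<close>, and
  \<open>\<nabla>\<^sub>xF = \<nabla>f - \<Sum>\<^sub>i \<phi>(t\<^sub>i, \<mu>) \<nabla>c\<^sub>i\<close>. Strict complementarity keeps every \<open>t\<^sub>i(x*, s*)\<close>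
  away from the kink at \<open>0\<close>, so near \<open>(x*, s*, 0)\<close>, the boundary \<open>\<mu> = 0\<close> included, the map
  \<open>(x, s, \<mu>) \<mapsto> \<nabla>\<^sub>xF\<close> is \<open>C\<^sup>1\<close> and its \<open>x\<close>-derivative is close to \<open>B*\<close>. Hence \<open>F(\<cdot>, s, \<mu>)\<close>
  is uniformly strongly convex on a ball around \<open>x*\<close>, and the implicit function theorem (obtained
  from the inverse function theorem for \<open>(x, p) \<mapsto> (\<nabla>\<^sub>xF, p)\<close>) yields a \<open>C\<^sup>1\<close> family of
  stationary points, which strong convexity turns into unique minimizers. Strong monotonicity of
  \<open>\<nabla>\<^sub>xF\<close> together with \<open>|\<phi>(t, \<mu>) - \<phi>(t*, 0)| \<le> |t - t*| + O(\<mu>)\<close> gives the error bounds.\<close>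

section \<open>Inverse and implicit functions\<close>

lemma blinfun_left_inverse_if_bounded_below:
  fixes A :: "'a::euclidean_space \<Rightarrow>\<^sub>L 'a"
  assumes "c > 0" and "\<And>v. c * norm v \<le> norm (A v)"
  obtains B where "B o\<^sub>L A = id_blinfun"
proof -
  have "inj (blinfun_apply A)"
  proof (rule injI)
    fix x y assume "A x = A y"
    then have "c * norm (x - y) \<le> 0"
      using assms(2)[of "x - y"] by (simp add: blinfun.diff_right)
    then show "x = y" using assms(1) by (simp add: mult_le_0_iff)
  qed
  then obtain g where g: "linear g" "g \<circ> blinfun_apply A = id"
    using linear_injective_left_inverse blinfun.bounded_linear_right bounded_linear.linear by blast
  have "Blinfun g o\<^sub>L A = id_blinfun"
    using g by (intro blinfun_eqI)
      (simp add: bounded_linear_Blinfun_apply linear_conv_bounded_linear pointfree_idE)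
  then show ?thesis by (rule that)
qed

lemma continuous_on_right_inverse:
  fixes A :: "'p::metric_space \<Rightarrow> ('a::real_normed_vector \<Rightarrow>\<^sub>L 'b::real_normed_vector)"
    and B :: "'p \<Rightarrow> ('b \<Rightarrow>\<^sub>L 'a)"
  assumes contA: "continuous_on S A" and c: "c > 0"
    and bounded_below: "\<And>p v. p \<in> S \<Longrightarrow> c * norm v \<le> norm (A p v)"
    and right_inverse: "\<And>p u. p \<in> S \<Longrightarrow> A p (B p u) = u"
  shows "continuous_on S B"
proof -
  have B_bound: "norm (B p u) \<le> norm u / c" if "p \<in> S" for p u
    using bounded_below[OF that, of "B p u"] right_inverse[OF that] c by (simp add: field_simps)
  have left_inverse: "B p (A p v) = v" if "p \<in> S" for p v
  proof -
    have "c * norm (B p (A p v) - v) \<le> 0"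
      using bounded_below[OF that, of "B p (A p v) - v"] right_inverse[OF that]
      by (simp add: blinfun.diff_right)
    then show ?thesis using c by (simp add: mult_le_0_iff)
  qed
  have B_diff: "norm (B p - B q) \<le> norm (A p - A q) / c^2" if "p \<in> S" "q \<in> S" for p q
  proof (rule norm_blinfun_bound)
    fix v
    have "(B p - B q) v = B p ((A q - A p) (B q v))"
      using left_inverse[OF that(1)] right_inverse[OF that(2)]
      by (simp add: blinfun.diff_left blinfun.diff_right)
    also have "norm \<dots> \<le> norm ((A q - A p) (B q v)) / c"
      by (rule B_bound[OF that(1)])
    also have "\<dots> \<le> norm (A q - A p) * norm (B q v) / c"
      using c by (intro divide_right_mono norm_blinfun) simp
    also have "\<dots> \<le> norm (A q - A p) * (norm v / c) / c"
      using c B_bound[OF that(2)] by (intro divide_right_mono mult_left_mono) simp_all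
    finally show "norm ((B p - B q) v) \<le> norm (A p - A q) / c^2 * norm v"
      by (simp add: norm_minus_commute power2_eq_square)
  qed simp
  show ?thesis unfolding continuous_on_iff
  proof (intro ballI allI impI)
    fix p0 and e :: real assume p0: "p0 \<in> S" and e: "0 < e"
    then obtain d where "d > 0" and d: "\<And>p. p \<in> S \<Longrightarrow> dist p p0 < d \<Longrightarrow> dist (A p) (A p0) < e * c^2"
      using contA c unfolding continuous_on_iff by (metis mult_pos_pos zero_less_power)
    have "dist (B p) (B p0) < e" if "p \<in> S" "dist p p0 < d" for p
    proof -
      have "norm (A p - A p0) / c^2 < e"
        using d[OF that] c by (simp add: dist_norm pos_divide_less_eq)
      then show ?thesis using B_diff[OF that(1) p0] by (simp add: dist_norm)
    qed
    then show "\<exists>d>0. \<forall>p\<in>S. dist p p0 < d \<longrightarrow> dist (B p) (B p0) < e"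
      using \<open>d > 0\<close> by blast
  qed
qed

lemma inverse_function_theorem_C1:
  fixes F :: "'a::euclidean_space \<Rightarrow> 'a" and F' :: "'a \<Rightarrow> 'a \<Rightarrow>\<^sub>L 'a"
  assumes U: "open U" "x0 \<in> U" and F': "\<And>x. x \<in> U \<Longrightarrow> (F has_derivative F' x) (at x)"
    and contF': "continuous_on U F'"
    and c: "c > 0" and bounded_below: "\<And>x v. x \<in> U \<Longrightarrow> c * norm v \<le> norm (F' x v)"
  obtains V g g' where "open V" "F x0 \<in> V" "\<And>y. y \<in> V \<Longrightarrow> g y \<in> U \<and> F (g y) = y"
    "\<And>y. y \<in> V \<Longrightarrow> (g has_derivative blinfun_apply (g' y)) (at y)"
    "continuous_on V g'"
proof -
  obtain invf where invf: "invf o\<^sub>L F' x0 = id_blinfun"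
    using blinfun_left_inverse_if_bounded_below[OF c bounded_below[OF U(2)]] by blast
  obtain U' V g g' where "open U'" "U' \<subseteq> U" "x0 \<in> U'" "open V" "F x0 \<in> V"
    and hom: "homeomorphism U' V F g"
    and g': "\<And>y. y \<in> V \<Longrightarrow> (g has_derivative g' y) (at y)"
    and g'_inv: "\<And>y. y \<in> V \<Longrightarrow> g' y = inv (F' (g y))"
    and bij: "\<And>y. y \<in> V \<Longrightarrow> bij (F' (g y))"
    by (rule inverse_function_theorem[OF U(1) F' contF' U(2) invf]) (assumption | rule that)+
  have gU: "g y \<in> U \<and> F (g y) = y" if "y \<in> V" for y
    using hom that \<open>U' \<subseteq> U\<close> by (auto simp: homeomorphism_def)
  have g'_apply: "blinfun_apply (Blinfun (g' y)) = g' y" if "y \<in> V" for y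
    using g'[OF that] by (simp add: bounded_linear_Blinfun_apply has_derivative_bounded_linear)
  show ?thesis
  proof (rule that[of V g "\<lambda>y. Blinfun (g' y)"])
    show "(g has_derivative blinfun_apply (Blinfun (g' y))) (at y)" if "y \<in> V" for y
      using g'[OF that] g'_apply[OF that] by simp
    show "continuous_on V (\<lambda>y. Blinfun (g' y))"
    proof (rule continuous_on_right_inverse[OF _ c])
      show "continuous_on V (\<lambda>y. F' (g y))"
        using hom gU by (intro continuous_on_compose2[OF contF'] image_subsetI)
          (auto simp: homeomorphism_def)
      show "c * norm v \<le> norm (F' (g y) v)" if "y \<in> V" for y v
        using bounded_below gU[OF that] by blast
      show "F' (g y) (Blinfun (g' y) u) = u" if "y \<in> V" for y u
        unfolding g'_apply[OF that] unfolding g'_inv[OF that]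
        using bij[OF that] by (simp add: bij_is_surj surj_f_inv_f)
    qed
  qed (use \<open>open V\<close> \<open>F x0 \<in> V\<close> gU in auto)
qed

text \<open>The lower bound on \<open>(G' w v, snd v)\<close> says that the partial derivative of \<open>G\<close> with respect to
  its first argument is uniformly invertible on \<open>U\<close>.\<close>

lemma implicit_function_C1:
  fixes G :: "'a::euclidean_space \<times> 'b::euclidean_space \<Rightarrow> 'a"
    and G' :: "'a \<times> 'b \<Rightarrow> ('a \<times> 'b) \<Rightarrow>\<^sub>L 'a"
  assumes U: "open U" "(x0, p0) \<in> U" and G0: "G (x0, p0) = 0"
    and G': "\<And>w. w \<in> U \<Longrightarrow> (G has_derivative G' w) (at w)"
    and contG': "continuous_on U G'"
    and c: "c > 0" and bounded_below: "\<And>w v. w \<in> U \<Longrightarrow> c * norm v \<le> norm (G' w v, snd v)"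
  obtains \<delta> X X' where "\<delta> > 0" "\<And>p. p \<in> ball p0 \<delta> \<Longrightarrow> (X p, p) \<in> U \<and> G (X p, p) = 0"
    "\<And>p. p \<in> ball p0 \<delta> \<Longrightarrow> (X has_derivative blinfun_apply (X' p)) (at p)"
    "continuous_on (ball p0 \<delta>) X'"
proof -
  define \<Phi> where "\<Phi> w = (G w, snd w)" for w
  define \<Phi>' where "\<Phi>' w = Blinfun (\<lambda>v. (G' w v, snd v))" for w
  have \<Phi>'_apply: "blinfun_apply (\<Phi>' w) = (\<lambda>v. (G' w v, snd v))" for w
    unfolding \<Phi>'_def
    by (intro bounded_linear_Blinfun_apply bounded_linear_Pair blinfun.bounded_linear_right
        bounded_linear_snd)
  have \<Phi>_deriv: "(\<Phi> has_derivative \<Phi>' w) (at w)" if "w \<in> U" for w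
    unfolding \<Phi>'_apply \<Phi>_def
    by (rule has_derivative_Pair[OF G'[OF that] has_derivative_snd[OF has_derivative_ident]])
  have cont\<Phi>': "continuous_on U \<Phi>'"
    by (rule continuous_on_blinfun_componentwise)
      (simp add: \<Phi>'_apply continuous_on_Pair
        bounded_bilinear.continuous_on[OF bounded_bilinear_blinfun_apply contG' continuous_on_const])
  obtain V g g' where "open V" "\<Phi> (x0, p0) \<in> V" and g: "\<And>y. y \<in> V \<Longrightarrow> g y \<in> U \<and> \<Phi> (g y) = y"
    and g': "\<And>y. y \<in> V \<Longrightarrow> (g has_derivative blinfun_apply (g' y)) (at y)"
    and cont_g': "continuous_on V g'"
    by (rule inverse_function_theorem_C1[OF U \<Phi>_deriv cont\<Phi>' c]) (auto simp: \<Phi>'_apply bounded_below)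
  then obtain \<delta> where "\<delta> > 0" and \<delta>: "ball (0, p0) \<delta> \<subseteq> V"
    using G0 open_contains_ball by (force simp: \<Phi>_def)
  have V: "(0, p) \<in> V" if "p \<in> ball p0 \<delta>" for p
    using that \<delta> by (auto simp: dist_Pair_Pair)
  define X where "X p = fst (g (0, p))" for p
  define X' where "X' p = fst_blinfun o\<^sub>L g' (0, p) o\<^sub>L Blinfun (Pair 0)" for p
  have "(X p, p) \<in> U \<and> G (X p, p) = 0" if "p \<in> ball p0 \<delta>" for p
  proof -
    have "g (0, p) \<in> U" "G (g (0, p)) = 0" "snd (g (0, p)) = p" using g[OF V[OF that]] by (auto simp: \<Phi>_def)
    moreover have "g (0, p) = (X p, snd (g (0, p)))" by (simp add: X_def)
    ultimately show ?thesis by metis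
  qed
  moreover have "(X has_derivative blinfun_apply (X' p)) (at p)" if "p \<in> ball p0 \<delta>" for p
  proof -
    have "blinfun_apply (X' p) = (\<lambda>q. fst (g' (0, p) (0, q)))"
      by (auto simp: X'_def bounded_linear_Blinfun_apply bounded_linear_Pair bounded_linear_zero)
    then show ?thesis
      unfolding X_def
      by (simp add: has_derivative_fst has_derivative_compose[OF has_derivative_Pair[OF
            has_derivative_const has_derivative_ident] g'[OF V[OF that]]])
  qed
  moreover have "continuous_on (ball p0 \<delta>) (\<lambda>p. g' (0, p))"
    using V by (intro continuous_on_compose2[OF cont_g'] continuous_on_Pair continuous_on_const
        continuous_on_id) auto
  then have "continuous_on (ball p0 \<delta>) X'"
    unfolding X'_def
    by (intro bounded_bilinear.continuous_on[OF bounded_bilinear_blinfun_compose] continuous_on_const)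
  ultimately show ?thesis by (rule that[OF \<open>\<delta> > 0\<close>])
qed

lemma eventually_less_nhds:
  fixes g :: "'a::t2_space \<Rightarrow> real"
  shows "isCont g w0 \<Longrightarrow> g w0 < b \<Longrightarrow> eventually (\<lambda>w. g w < b) (nhds w0)"
  unfolding isCont_def tendsto_at_iff_tendsto_nhds by (rule order_tendstoD(2))

lemma continuous_on_if_lipschitz_bound:
  fixes g :: "'a::real_normed_vector \<Rightarrow> 'b::real_normed_vector"
  assumes "\<forall>x\<in>S. \<forall>x'\<in>S. norm (g x - g x') \<le> L * norm (x - x')"
  shows "continuous_on S g"
proof (rule lipschitz_on_continuous_on, rule lipschitz_onI)
  fix x y assume "x \<in> S" "y \<in> S"
  then have "norm (g x - g y) \<le> L * norm (x - y)" using assms by blast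
  also have "\<dots> \<le> max L 0 * norm (x - y)" by (intro mult_right_mono) auto
  finally show "dist (g x) (g y) \<le> max L 0 * dist x y" by (simp add: dist_norm)
qed simp

lemma box_subset_ball:
  fixes s0 :: "'a::real_normed_vector"
  shows "{(s, \<mu>). norm (s - s0) \<le> r \<and> 0 \<le> \<mu> \<and> \<mu> < r} \<subseteq> ball (s0, 0::real) (2 * r)"
proof safe
  fix s and \<mu> :: real assume "norm (s - s0) \<le> r" "0 \<le> \<mu>" "\<mu> < r"
  moreover have "dist (s0, 0) (s, \<mu>) \<le> norm (s - s0) + \<bar>\<mu>\<bar>"
    using norm_Pair_le[of "s0 - s" "0 - \<mu>"] by (simp add: dist_norm norm_minus_commute)
  ultimately show "(s, \<mu>) \<in> ball (s0, 0) (2 * r)" by simp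
qed

section \<open>Strongly convex functions\<close>

lemma strongly_monotone_if_derivative_coercive:
  fixes Gr :: "'a::real_inner \<Rightarrow> 'a"
  assumes S: "convex S" and Gr': "\<And>x. x \<in> S \<Longrightarrow> (Gr has_derivative Gr' x) (at x)"
    and coercive: "\<And>x v. x \<in> S \<Longrightarrow> \<kappa> * (norm v)^2 \<le> v \<bullet> Gr' x v"
    and x: "x \<in> S" and y: "y \<in> S"
  shows "\<kappa> * (norm (x - y))^2 \<le> (Gr x - Gr y) \<bullet> (x - y)"
proof -
  define d where "d = x - y"
  have seg: "y + t *\<^sub>R d \<in> S" if "0 \<le> t" "t \<le> 1" for t
    using convexD[OF S y x, of "1 - t" t] that by (simp add: d_def algebra_simps)
  have "((\<lambda>t. Gr (y + t *\<^sub>R d) \<bullet> d) has_real_derivative Gr' (y + t *\<^sub>R d) d \<bullet> d) (at t)"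
    if "0 \<le> t" "t \<le> 1" for t
  proof -
    have D: "((\<lambda>t. Gr (y + t *\<^sub>R d) \<bullet> d) has_derivative (\<lambda>s. Gr' (y + t *\<^sub>R d) (s *\<^sub>R d) \<bullet> d)) (at t)"
    proof -
      have "((\<lambda>t. y + t *\<^sub>R d) has_derivative (\<lambda>s. s *\<^sub>R d)) (at t)"
        by (auto intro!: derivative_eq_intros)
      from has_derivative_compose[OF this Gr'[OF seg[OF that]]] show ?thesis
        by (rule has_derivative_inner_left)
    qed
    have "Gr' (y + t *\<^sub>R d) (s *\<^sub>R d) = s *\<^sub>R Gr' (y + t *\<^sub>R d) d" for s
      using has_derivative_bounded_linear[OF Gr'[OF seg[OF that]]] by (simp add: linear_simps)
    then show ?thesis
      unfolding has_field_derivative_def by (intro has_derivative_eq_rhs[OF D]) (simp add: fun_eq_iff)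
  qed
  then obtain z where z: "0 < z" "z < 1"
    and mvt: "Gr x \<bullet> d - Gr y \<bullet> d = Gr' (y + z *\<^sub>R d) d \<bullet> d"
    using MVT2[of 0 1 "\<lambda>t. Gr (y + t *\<^sub>R d) \<bullet> d" "\<lambda>t. Gr' (y + t *\<^sub>R d) d \<bullet> d"] by (auto simp: d_def)
  have "\<kappa> * (norm d)^2 \<le> Gr' (y + z *\<^sub>R d) d \<bullet> d"
    using coercive[OF seg, of z d] z by (simp add: inner_commute)
  then show ?thesis using mvt by (simp add: d_def inner_diff_left)
qed

lemma strongly_convex_strict_min:
  fixes F :: "'a::real_inner \<Rightarrow> real"
  assumes S: "convex S" and F': "\<And>x. x \<in> S \<Longrightarrow> (F has_derivative (\<lambda>h. Gr x \<bullet> h)) (at x)"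
    and Gr': "\<And>x. x \<in> S \<Longrightarrow> (Gr has_derivative Gr' x) (at x)"
    and coercive: "\<And>x v. x \<in> S \<Longrightarrow> \<kappa> * (norm v)^2 \<le> v \<bullet> Gr' x v" and "\<kappa> > 0"
    and x0: "x0 \<in> S" "Gr x0 = 0" and x: "x \<in> S" "x \<noteq> x0"
  shows "F x0 < F x"
proof -
  define d where "d = x - x0"
  have seg: "x0 + t *\<^sub>R d \<in> S" if "0 \<le> t" "t \<le> 1" for t
    using convexD[OF S x0(1) x(1), of "1 - t" t] that by (simp add: d_def algebra_simps)
  have "((\<lambda>t. F (x0 + t *\<^sub>R d)) has_real_derivative Gr (x0 + t *\<^sub>R d) \<bullet> d) (at t)"
    if "0 \<le> t" "t \<le> 1" for t
  proof -
    have "((\<lambda>t. x0 + t *\<^sub>R d) has_derivative (\<lambda>s. s *\<^sub>R d)) (at t)"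
      by (auto intro!: derivative_eq_intros)
    from has_derivative_compose[OF this F'[OF seg[OF that]]] show ?thesis
      unfolding has_field_derivative_def
      by (rule has_derivative_eq_rhs) (simp add: fun_eq_iff)
  qed
  then obtain z where z: "0 < z" "z < 1" and mvt: "F x - F x0 = Gr (x0 + z *\<^sub>R d) \<bullet> d"
    using MVT2[of 0 1 "\<lambda>t. F (x0 + t *\<^sub>R d)" "\<lambda>t. Gr (x0 + t *\<^sub>R d) \<bullet> d"] by (auto simp: d_def)
  have "\<kappa> * (norm (z *\<^sub>R d))^2 \<le> (Gr (x0 + z *\<^sub>R d) - Gr x0) \<bullet> (z *\<^sub>R d)"
    using strongly_monotone_if_derivative_coercive[OF S Gr' coercive seg x0(1)] z by simp
  then have "z * (\<kappa> * z * (norm d)^2) \<le> z * (Gr (x0 + z *\<^sub>R d) \<bullet> d)"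
    using x0(2) by (simp add: power_mult_distrib power2_eq_square mult_ac)
  then have "\<kappa> * z * (norm d)^2 \<le> F x - F x0"
    using z mvt by simp
  moreover have "0 < \<kappa> * z * (norm d)^2" using \<open>\<kappa> > 0\<close> z x(2) by (simp add: d_def)
  ultimately show ?thesis by simp
qed

section \<open>Matrices and quadratic forms\<close>

lemma outer_mult_vec: "outer u *v h = (u \<bullet> h) *\<^sub>R u"
  by (simp add: vec_eq_iff outer_def matrix_vector_mult_def inner_vec_def sum_distrib_left mult_ac)

lemma sum_matrix_vector_mult:
  "finite S \<Longrightarrow> (\<Sum>i\<in>S. (M i :: real^'n^'k)) *v v = (\<Sum>i\<in>S. M i *v v)"
  by (induct S rule: finite_induct) (auto simp: matrix_vector_mult_add_rdistrib)

lemma continuous_outer [continuous_intros]: "continuous F g \<Longrightarrow> continuous F (\<lambda>x. outer (g x))"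
  unfolding continuous_def outer_def by (intro tendsto_vec_lambda tendsto_mult tendsto_vec_nth)

lemma continuous_matrix_vector_mult [continuous_intros]:
  fixes A :: "'a::t2_space \<Rightarrow> real^'n^'k"
  shows "continuous F A \<Longrightarrow> continuous F (\<lambda>x. A x *v h)"
  unfolding continuous_def matrix_vector_mult_def
  by (intro tendsto_vec_lambda tendsto_sum tendsto_mult tendsto_vec_nth tendsto_const)

lemma norm_matrix_vector_mult_le:
  fixes X :: "real^'n^'m"
  shows "norm (X *v v) \<le> (\<Sum>i\<in>UNIV. \<Sum>j\<in>UNIV. \<bar>X $ i $ j\<bar>) * norm v"
proof -
  have "norm (X *v v) \<le> onorm ((*v) X) * norm v"
    by (rule onorm[OF matrix_vector_mul_bounded_linear])
  also have "\<dots> \<le> (\<Sum>i\<in>UNIV. \<Sum>j\<in>UNIV. \<bar>X $ i $ j\<bar>) * norm v"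
    by (intro mult_right_mono onorm_le_matrix_component_sum) auto
  finally show ?thesis .
qed

lemma posdef_uniformly:
  fixes M :: "real^'n^'n"
  assumes "\<And>v. v \<noteq> 0 \<Longrightarrow> v \<bullet> (M *v v) > 0"
  obtains \<kappa> where "\<kappa> > 0" "\<And>v. \<kappa> * (norm v)^2 \<le> v \<bullet> (M *v v)"
proof -
  have "axis undefined 1 \<in> sphere (0::real^'n) 1" by simp
  moreover have "continuous_on (sphere 0 1) (\<lambda>v::real^'n. v \<bullet> (M *v v))"
    by (intro continuous_intros bounded_linear.continuous_on[OF matrix_vector_mul_bounded_linear])
  ultimately obtain v0 where v0: "v0 \<in> sphere 0 1" "\<And>u. u \<in> sphere 0 1 \<Longrightarrow> v0 \<bullet> (M *v v0) \<le> u \<bullet> (M *v u)"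
    using continuous_attains_inf[OF compact_sphere] by blast
  have bound: "v0 \<bullet> (M *v v0) * (norm v)^2 \<le> v \<bullet> (M *v v)" for v
  proof (cases "v = 0")
    case False
    define u where "u = (1 / norm v) *\<^sub>R v"
    have "v \<bullet> (M *v v) = (norm v)^2 * (u \<bullet> (M *v u))"
      using False by (simp add: u_def matrix_vector_mult_scaleR power2_eq_square)
    moreover have "u \<in> sphere 0 1" using False by (simp add: u_def)
    ultimately show ?thesis using v0(2)[of u] by (simp add: mult.commute[of _ "(norm v)^2"] mult_left_mono)
  qed simp
  have "v0 \<noteq> 0" using v0(1) by auto
  then have "v0 \<bullet> (M *v v0) > 0" by (rule assms)
  then show ?thesis using bound by (rule that)
qed

lemma posdef_perturb:
  fixes M N :: "real^'n^'n"
  assumes M: "\<And>v. \<kappa> * (norm v)^2 \<le> v \<bullet> (M *v v)"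
    and close: "(\<Sum>i\<in>UNIV. \<Sum>j\<in>UNIV. \<bar>(N - M) $ i $ j\<bar>) < \<kappa>/2"
  shows "\<kappa>/2 * (norm v)^2 \<le> v \<bullet> (N *v v)"
proof -
  have "\<bar>v \<bullet> ((N - M) *v v)\<bar> \<le> norm v * norm ((N - M) *v v)" by (rule Cauchy_Schwarz_ineq2)
  also have "\<dots> \<le> norm v * (\<kappa>/2 * norm v)"
  proof (intro mult_left_mono)
    show "norm ((N - M) *v v) \<le> \<kappa>/2 * norm v"
      using close by (intro order_trans[OF norm_matrix_vector_mult_le] mult_right_mono) auto
  qed simp
  finally have "\<bar>v \<bullet> ((N - M) *v v)\<bar> \<le> \<kappa>/2 * (norm v)^2" by (simp add: power2_eq_square mult_ac)
  moreover have "v \<bullet> (N *v v) = v \<bullet> (M *v v) + v \<bullet> ((N - M) *v v)"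
    by (simp add: matrix_vector_mult_diff_rdistrib inner_diff_right)
  ultimately show ?thesis using M[of v] by (simp add: abs_le_iff)
qed

section \<open>The smoothed multiplier\<close>

text \<open>At \<open>\<mu> = 0\<close> this is \<open>max t 0\<close>.\<close>
definition smooth_plus :: "real \<Rightarrow> real \<Rightarrow> real \<Rightarrow> real" where
  "smooth_plus \<rho> t \<mu> = (sqrt (t^2 + 4*\<rho>*\<mu>) + t) / 2"

definition smooth_plus_dt :: "real \<Rightarrow> real \<Rightarrow> real \<Rightarrow> real" where
  "smooth_plus_dt \<rho> t \<mu> = (1 + t / sqrt (t^2 + 4*\<rho>*\<mu>)) / 2"

definition smooth_plus_dmu :: "real \<Rightarrow> real \<Rightarrow> real \<Rightarrow> real" where
  "smooth_plus_dmu \<rho> t \<mu> = \<rho> / sqrt (t^2 + 4*\<rho>*\<mu>)"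

definition barrier_term :: "real \<Rightarrow> real \<Rightarrow> real \<Rightarrow> real" where
  "barrier_term \<rho> \<mu> t =
     (if \<mu> = 0 then 0 else - \<mu> * ln ((1 / (2*\<rho>)) * (sqrt (t^2 + 4*\<rho>*\<mu>) - t)))
     + \<rho> / 2 * ((1 / (2*\<rho>)) * (sqrt (t^2 + 4*\<rho>*\<mu>) + t))^2"

lemma hfun_eq_barrier_term:
  "hfun c x s \<mu> \<rho> i = barrier_term \<rho> \<mu> (s$i - \<rho> * c x $ i) - 1 / (2*\<rho>) * (s$i)^2"
  unfolding hfun_def barrier_term_def zfun_def yfun_def by simp

lemma yfun_eq_smooth_plus:
  "\<rho> > 0 \<Longrightarrow> \<rho> * yfun c x s \<mu> \<rho> i = smooth_plus \<rho> (s$i - \<rho> * c x $ i) \<mu>"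
  unfolding yfun_def smooth_plus_def by (simp add: field_simps)

lemma barrier_term_has_derivative_pos_mu:
  assumes "\<rho> > 0" "\<mu> > 0"
  shows "(barrier_term \<rho> \<mu> has_real_derivative smooth_plus \<rho> t \<mu> / \<rho>) (at t)"
proof -
  define r where "r = sqrt (t^2 + 4*\<rho>*\<mu>)"
  have pos: "t^2 + 4*\<rho>*\<mu> > 0" using assms by (simp add: add_nonneg_pos)
  have r2: "r^2 = t^2 + 4*\<rho>*\<mu>" unfolding r_def using pos by simp
  have "\<bar>t\<bar> < r" unfolding r_def using assms
    by (intro real_less_rsqrt) (simp add: power2_abs)
  then have rt: "r - t > 0" and r: "r > 0" by linarith+
  have "((\<lambda>u. - \<mu> * ln ((1 / (2*\<rho>)) * (sqrt (u^2 + 4*\<rho>*\<mu>) - u))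
      + \<rho> / 2 * ((1 / (2*\<rho>)) * (sqrt (u^2 + 4*\<rho>*\<mu>) + u))^2) has_real_derivative
      (r + t) * (inverse r * t * 2 + 2) / (8 * \<rho>) - (4 * (inverse r * t) - 4) * \<mu> / (r * 4 - t * 4)) (at t)"
    using pos rt assms by (auto intro!: derivative_eq_intros simp: r_def[symmetric])
  moreover have "(r + t) * (inverse r * t * 2 + 2) / (8 * \<rho>) - (4 * (inverse r * t) - 4) * \<mu> / (r * 4 - t * 4)
      = smooth_plus \<rho> t \<mu> / \<rho>"
  proof -
    have \<mu>: "\<mu> = (r*r - t*t) / (\<rho>*4)" using assms(1) r2 by (simp add: field_simps power2_eq_square)
    show ?thesis unfolding smooth_plus_def r_def[symmetric] \<mu> using r rt assms(1)
      by (simp add: field_simps power2_eq_square)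
  qed
  ultimately show ?thesis using assms by (simp add: barrier_term_def[abs_def])
qed

lemma barrier_term_has_derivative_zero_mu:
  assumes "\<rho> > 0" "t \<noteq> 0"
  shows "(barrier_term \<rho> 0 has_real_derivative smooth_plus \<rho> t 0 / \<rho>) (at t)"
proof (cases "t > 0")
  case True
  have "((\<lambda>u. u^2 / (2*\<rho>)) has_real_derivative t / \<rho>) (at t)"
    using assms by (auto intro!: derivative_eq_intros simp: field_simps)
  moreover have "u^2 / (2*\<rho>) = barrier_term \<rho> 0 u" if "u \<in> {0<..}" for u
    using assms that by (simp add: barrier_term_def power2_eq_square field_simps)
  ultimately show ?thesis
    using has_field_derivative_transform_within_open[of _ _ t "{0<..}"] True
    by (simp add: smooth_plus_def)
next
  case False
  then have "t < 0" using assms by simp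
  have "0 = barrier_term \<rho> 0 u" if "u \<in> {..<0}" for u
    using that by (simp add: barrier_term_def)
  then show ?thesis
    using has_field_derivative_transform_within_open[of "\<lambda>_. 0" 0 t "{..<0}"] \<open>t < 0\<close>
    by (simp add: smooth_plus_def)
qed

lemma barrier_term_has_derivative:
  assumes "\<rho> > 0" "\<mu> \<ge> 0" "\<mu> = 0 \<longrightarrow> t \<noteq> 0"
  shows "(barrier_term \<rho> \<mu> has_real_derivative smooth_plus \<rho> t \<mu> / \<rho>) (at t)"
  using assms barrier_term_has_derivative_pos_mu barrier_term_has_derivative_zero_mu
  by (cases "\<mu> = 0") auto

lemma smooth_plus_has_derivative:
  fixes T M :: "'a::real_normed_vector \<Rightarrow> real"
  assumes "(T has_derivative T') (at w)" "(M has_derivative M') (at w)" "T w ^2 + 4*\<rho>*M w > 0"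
  shows "((\<lambda>w. smooth_plus \<rho> (T w) (M w)) has_derivative
           (\<lambda>v. smooth_plus_dt \<rho> (T w) (M w) * T' v + smooth_plus_dmu \<rho> (T w) (M w) * M' v)) (at w)"
proof -
  have "((\<lambda>w. (sqrt ((T w)^2 + 4*\<rho>*M w) + T w) / 2) has_derivative
     (\<lambda>v. (((2 * T w * T' v + 4*\<rho>*M' v) * (inverse (sqrt ((T w)^2 + 4*\<rho>*M w)) / 2)) + T' v) / 2)) (at w)"
    using assms by (auto intro!: derivative_eq_intros simp: ac_simps)
  moreover have "(\<lambda>v. (((2 * T w * T' v + 4*\<rho>*M' v) * (inverse (sqrt ((T w)^2 + 4*\<rho>*M w)) / 2)) + T' v) / 2)
     = (\<lambda>v. smooth_plus_dt \<rho> (T w) (M w) * T' v + smooth_plus_dmu \<rho> (T w) (M w) * M' v)"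
    using assms(3) by (intro ext) (simp add: smooth_plus_dt_def smooth_plus_dmu_def field_simps)
  ultimately show ?thesis unfolding smooth_plus_def by simp
qed

lemma continuous_smooth_plus [continuous_intros]:
  "continuous F T \<Longrightarrow> continuous F M \<Longrightarrow> continuous F (\<lambda>w. smooth_plus \<rho> (T w) (M w))"
  unfolding smooth_plus_def continuous_def by (intro tendsto_intros) auto

lemma isCont_smooth_plus_dt:
  "isCont T w \<Longrightarrow> isCont M w \<Longrightarrow> T w ^2 + 4*\<rho>* M w > 0
    \<Longrightarrow> isCont (\<lambda>w. smooth_plus_dt \<rho> (T w) (M w)) w"
  unfolding smooth_plus_dt_def
  by (intro continuous_intros isCont_o2[where g=sqrt] continuous_real_sqrt) auto

lemma isCont_smooth_plus_dmu:
  "isCont T w \<Longrightarrow> isCont M w \<Longrightarrow> T w ^2 + 4*\<rho>* M w > 0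
    \<Longrightarrow> isCont (\<lambda>w. smooth_plus_dmu \<rho> (T w) (M w)) w"
  unfolding smooth_plus_dmu_def
  by (intro continuous_intros isCont_o2[where g=sqrt] continuous_real_sqrt) auto

lemma smooth_plus_dist_le:
  assumes "\<rho> > 0" "a > 0" "\<mu> \<ge> 0" "a \<le> \<bar>t\<bar>"
  shows "\<bar>smooth_plus \<rho> t \<mu> - smooth_plus \<rho> t0 0\<bar> \<le> \<bar>t - t0\<bar> + 2*\<rho>*\<mu>/a"
proof -
  define r where "r = sqrt (t^2 + 4*\<rho>*\<mu>)"
  define e where "e = 2*\<rho>*\<mu>/a"
  have "\<bar>t\<bar> \<le> r" unfolding r_def using assms by (intro real_le_rsqrt) simp
  then have nonneg: "0 \<le> r - \<bar>t\<bar>" and sum: "a \<le> r + \<bar>t\<bar>" using assms by linarith+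
  have "(r - \<bar>t\<bar>) * (r + \<bar>t\<bar>) = 4*\<rho>*\<mu>"
    using assms unfolding r_def by (simp add: algebra_simps power2_eq_square[symmetric])
  then have "(r - \<bar>t\<bar>) * a \<le> 4*\<rho>*\<mu>" using nonneg sum by (metis mult_left_mono)
  then have "r - \<bar>t\<bar> \<le> 2 * e" using assms by (simp add: e_def pos_le_divide_eq)
  moreover have "2 * (smooth_plus \<rho> t \<mu> - smooth_plus \<rho> t0 0) = (r - \<bar>t\<bar>) + (\<bar>t\<bar> - \<bar>t0\<bar>) + (t - t0)"
    unfolding smooth_plus_def r_def by (simp add: field_simps)
  moreover have "\<bar>\<bar>t\<bar> - \<bar>t0\<bar>\<bar> \<le> \<bar>t - t0\<bar>" by (rule abs_triangle_ineq3)
  moreover have "\<bar>D\<bar> \<le> x + e"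
    if "2 * D = g + b + c" "g \<le> 2 * e" "\<bar>b\<bar> \<le> x" "0 \<le> g" "\<bar>c\<bar> \<le> x" for D g b c x :: real
    using that by (intro abs_leI; linarith)
  ultimately show ?thesis using nonneg unfolding e_def[symmetric] by auto
qed

lemma smooth_plus_derivative_bounds:
  assumes "\<rho> > 0" "a > 0" "a \<le> \<bar>t\<bar>" "t^2/2 \<le> t^2 + 4*\<rho>*\<mu>"
  shows "\<bar>smooth_plus_dt \<rho> t \<mu>\<bar> \<le> 2" and "\<bar>smooth_plus_dmu \<rho> t \<mu>\<bar> \<le> 2*\<rho>/a"
proof -
  define r where "r = sqrt (t^2 + 4*\<rho>*\<mu>)"
  have "(\<bar>t\<bar>/2)^2 = t^2/4" by (simp add: power_divide)
  then have "(\<bar>t\<bar>/2)^2 \<le> t^2 + 4*\<rho>*\<mu>" using assms(4) zero_le_power2[of t] by linarith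
  then have s: "\<bar>t\<bar>/2 \<le> r" unfolding r_def by (intro real_le_rsqrt)
  then have r: "r > 0" and ra: "a/2 \<le> r" using assms by linarith+
  define q where "q = t / r"
  have "\<bar>q\<bar> \<le> 2" using s r by (simp add: q_def abs_divide divide_le_eq)
  then show "\<bar>smooth_plus_dt \<rho> t \<mu>\<bar> \<le> 2"
    unfolding smooth_plus_dt_def r_def[symmetric] q_def[symmetric] by (simp add: abs_le_iff field_simps)
  have "\<rho> / r \<le> \<rho> / (a/2)"
    using ra assms by (intro divide_left_mono) auto
  then show "\<bar>smooth_plus_dmu \<rho> t \<mu>\<bar> \<le> 2*\<rho>/a"
    unfolding smooth_plus_dmu_def r_def[symmetric] using assms r by (simp add: ac_simps)
qed

lemma half_square_le_perturbed:
  fixes a t \<mu> \<rho> :: real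
  assumes "\<rho> > 0" "a > 0" "a \<le> \<bar>t\<bar>" "\<bar>\<mu>\<bar> < a^2 / (8*\<rho>)"
  shows "t^2/2 \<le> t^2 + 4*\<rho>*\<mu>"
proof -
  have "a^2 \<le> t^2" using assms(2,3) by (metis abs_le_square_iff abs_of_pos)
  moreover have "\<bar>4*\<rho>*\<mu>\<bar> < a^2/2" using assms(1,4) by (simp add: abs_mult field_simps)
  ultimately show ?thesis by (simp add: abs_less_iff)
qed

section \<open>The penalty-barrier function near a KKT pair\<close>

locale kkt_point =
  fixes f :: "real^'n \<Rightarrow> real" and c :: "real^'n \<Rightarrow> real^'m"
    and Df :: "real^'n \<Rightarrow> real^'n" and Hf :: "real^'n \<Rightarrow> real^'n^'n"
    and Dc :: "'m \<Rightarrow> real^'n \<Rightarrow> real^'n" and Hc :: "'m \<Rightarrow> real^'n \<Rightarrow> real^'n^'n"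
    and xs :: "real^'n" and ss :: "real^'m" and \<rho> :: real
  assumes f_grad: "\<And>x. (f has_derivative (\<lambda>h. Df x \<bullet> h)) (at x)"
    and f_hess: "\<And>x. (Df has_derivative (\<lambda>h. Hf x *v h)) (at x)"
    and c_grad: "\<And>i x. ((\<lambda>x. c x $ i) has_derivative (\<lambda>h. Dc i x \<bullet> h)) (at x)"
    and c_hess: "\<And>i x. (Dc i has_derivative (\<lambda>h. Hc i x *v h)) (at x)"
    and hess_cont: "\<exists>r>0. \<forall>x\<in>ball xs r. isCont Hf x \<and> (\<forall>i. isCont (Hc i) x)"
    and KKT_stat: "Df xs - (\<Sum>i\<in>UNIV. ss$i *\<^sub>R Dc i xs) = 0"
    and KKT_feas: "\<forall>i. c xs $ i \<ge> 0"
    and KKT_dual: "\<forall>i. ss $ i \<ge> 0"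
    and KKT_compl: "ss \<bullet> c xs = 0"
    and strict_compl: "\<forall>i. ss $ i + c xs $ i > 0"
    and rho_pos: "\<rho> > 0"
    and B_posdef: "\<forall>v. v \<noteq> 0 \<longrightarrow>
          v \<bullet> ((Hf xs - (\<Sum>i\<in>UNIV. ss$i *\<^sub>R Hc i xs)
                 + \<rho> *\<^sub>R (\<Sum>i\<in>{i. ss$i > 0}. outer (Dc i xs))) *v v) > 0"
begin

definition tau :: "'m \<Rightarrow> real^'n \<Rightarrow> real^'m \<Rightarrow> real" where
  "tau i x s = s$i - \<rho> * c x $ i"

definition gradF :: "real^'n \<Rightarrow> real^'m \<Rightarrow> real \<Rightarrow> real^'n" where
  "gradF x s \<mu> = Df x - (\<Sum>i\<in>UNIV. smooth_plus \<rho> (tau i x s) \<mu> *\<^sub>R Dc i x)"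

definition hessF :: "real^'n \<Rightarrow> real^'m \<Rightarrow> real \<Rightarrow> real^'n^'n" where
  "hessF x s \<mu> = Hf x - (\<Sum>i\<in>UNIV. smooth_plus \<rho> (tau i x s) \<mu> *\<^sub>R Hc i x)
     + \<rho> *\<^sub>R (\<Sum>i\<in>UNIV. smooth_plus_dt \<rho> (tau i x s) \<mu> *\<^sub>R outer (Dc i x))"

text \<open>Minus the derivative of \<open>gradF x\<close> with respect to \<open>(s, \<mu>)\<close> in direction \<open>(k, m)\<close>.\<close>
definition gradF_param :: "real^'n \<Rightarrow> real^'m \<Rightarrow> real \<Rightarrow> real^'m \<Rightarrow> real \<Rightarrow> real^'n" where
  "gradF_param x s \<mu> k m =
     (\<Sum>i\<in>UNIV. (smooth_plus_dt \<rho> (tau i x s) \<mu> * k$i + smooth_plus_dmu \<rho> (tau i x s) \<mu> * m) *\<^sub>R Dc i x)"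

definition gradF_joint :: "(real^'n) \<times> (real^'m) \<times> real \<Rightarrow> real^'n" where
  "gradF_joint w = gradF (fst w) (fst (snd w)) (snd (snd w))"

definition gradF_jac :: "(real^'n) \<times> (real^'m) \<times> real \<Rightarrow> (real^'n) \<times> (real^'m) \<times> real \<Rightarrow> real^'n" where
  "gradF_jac w v = hessF (fst w) (fst (snd w)) (snd (snd w)) *v fst v
     - gradF_param (fst w) (fst (snd w)) (snd (snd w)) (fst (snd v)) (snd (snd v))"

definition Bstar :: "real^'n^'n" where
  "Bstar = Hf xs - (\<Sum>i\<in>UNIV. ss$i *\<^sub>R Hc i xs) + \<rho> *\<^sub>R (\<Sum>i\<in>{i. ss$i > 0}. outer (Dc i xs))"

lemma has_derivative_tau_joint:
  "((\<lambda>w. tau i (fst w) (fst (snd w))) has_derivative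
    (\<lambda>v. fst (snd v) $ i - \<rho> * (Dc i (fst w) \<bullet> fst v))) (at w)"
  unfolding tau_def
  by (intro has_derivative_diff has_derivative_mult_right
      has_derivative_compose[OF has_derivative_fst[OF has_derivative_ident] c_grad]
      bounded_linear.has_derivative[OF bounded_linear_vec_nth]
      has_derivative_fst has_derivative_snd has_derivative_ident)

lemma hessF_mult_vec:
  "hessF x s \<mu> *v h = Hf x *v h - (\<Sum>i\<in>UNIV. smooth_plus \<rho> (tau i x s) \<mu> *\<^sub>R (Hc i x *v h))
     + \<rho> *\<^sub>R (\<Sum>i\<in>UNIV. (smooth_plus_dt \<rho> (tau i x s) \<mu> * (Dc i x \<bullet> h)) *\<^sub>R Dc i x)"
  unfolding hessF_def
  by (simp add: matrix_vector_mult_add_rdistrib matrix_vector_mult_diff_rdistrib sum_matrix_vector_mult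
      scaleR_matrix_vector_assoc[symmetric] outer_mult_vec)

lemma gradF_joint_has_derivative:
  assumes "\<forall>i. (tau i (fst w) (fst (snd w)))^2 + 4*\<rho>* snd (snd w) > 0"
  shows "(gradF_joint has_derivative gradF_jac w) (at w)"
proof -
  let ?x = "fst w" and ?t = "\<lambda>i. tau i (fst w) (fst (snd w))" and ?\<mu> = "snd (snd w)"
  have Dc: "((\<lambda>w. Dc i (fst w)) has_derivative (\<lambda>v. Hc i ?x *v fst v)) (at w)" for i
    by (rule has_derivative_compose[OF has_derivative_fst[OF has_derivative_ident] c_hess])
  have summand: "((\<lambda>w. smooth_plus \<rho> (tau i (fst w) (fst (snd w))) (snd (snd w)) *\<^sub>R Dc i (fst w)) has_derivative
     (\<lambda>v. smooth_plus \<rho> (?t i) ?\<mu> *\<^sub>R (Hc i ?x *v fst v)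
        + (smooth_plus_dt \<rho> (?t i) ?\<mu> * (fst (snd v) $ i - \<rho> * (Dc i ?x \<bullet> fst v))
           + smooth_plus_dmu \<rho> (?t i) ?\<mu> * snd (snd v)) *\<^sub>R Dc i ?x)) (at w)" for i
    using assms
    by (intro has_derivative_scaleR[OF smooth_plus_has_derivative[OF has_derivative_tau_joint
          has_derivative_snd[OF has_derivative_snd[OF has_derivative_ident]]] Dc]) auto
  have "(gradF_joint has_derivative (\<lambda>v. Hf ?x *v fst v - (\<Sum>i\<in>UNIV.
        smooth_plus \<rho> (?t i) ?\<mu> *\<^sub>R (Hc i ?x *v fst v)
        + (smooth_plus_dt \<rho> (?t i) ?\<mu> * (fst (snd v) $ i - \<rho> * (Dc i ?x \<bullet> fst v))
           + smooth_plus_dmu \<rho> (?t i) ?\<mu> * snd (snd v)) *\<^sub>R Dc i ?x))) (at w)"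
    unfolding gradF_joint_def gradF_def
    by (intro has_derivative_diff has_derivative_sum summand
        has_derivative_compose[OF has_derivative_fst[OF has_derivative_ident] f_hess])
  then show ?thesis
    by (rule has_derivative_eq_rhs)
      (simp add: fun_eq_iff gradF_jac_def hessF_mult_vec gradF_param_def algebra_simps sum.distrib
        sum_subtractf scaleR_sum_right)
qed

lemma F_has_derivative:
  assumes "\<mu> \<ge> 0" "\<mu> = 0 \<longrightarrow> (\<forall>i. tau i x s \<noteq> 0)"
  shows "((\<lambda>x. Ffun f c x s \<mu> \<rho>) has_derivative (\<lambda>h. gradF x s \<mu> \<bullet> h)) (at x)"
proof -
  have tau: "((\<lambda>x. tau i x s) has_derivative (\<lambda>h. - (\<rho> * (Dc i x \<bullet> h)))) (at x)" for i
    unfolding tau_def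
    using has_derivative_diff[OF has_derivative_const has_derivative_mult_right[OF c_grad]] by simp
  have "((\<lambda>x. hfun c x s \<mu> \<rho> i) has_derivative
      (\<lambda>h. - (\<rho> * (Dc i x \<bullet> h)) * (smooth_plus \<rho> (tau i x s) \<mu> / \<rho>))) (at x)" for i
    using has_derivative_diff[OF DERIV_compose_FDERIV[OF barrier_term_has_derivative[OF rho_pos assms(1)]
          tau] has_derivative_const] assms
    by (simp add: hfun_eq_barrier_term tau_def)
  then have "((\<lambda>x. Ffun f c x s \<mu> \<rho>) has_derivative (\<lambda>h. Df x \<bullet> h
      + (\<Sum>i\<in>UNIV. - (\<rho> * (Dc i x \<bullet> h)) * (smooth_plus \<rho> (tau i x s) \<mu> / \<rho>)))) (at x)"
    unfolding Ffun_def by (intro has_derivative_add f_grad has_derivative_sum)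
  then show ?thesis
    by (rule has_derivative_eq_rhs) (use rho_pos in \<open>auto simp: gradF_def inner_diff_left
      inner_sum_left sum_negf mult.commute intro!: ext sum.cong\<close>)
qed

lemma KKT_compl_componentwise: "ss$i * c xs $ i = 0"
proof -
  have "(\<Sum>i\<in>UNIV. ss$i * c xs $ i) = 0" using KKT_compl by (simp add: inner_vec_def)
  moreover have "\<forall>i\<in>UNIV. 0 \<le> ss$i * c xs $ i" using KKT_feas KKT_dual by simp
  ultimately show ?thesis by (simp add: sum_nonneg_eq_0_iff)
qed

lemma tau_kkt_pos: "ss$i > 0 \<Longrightarrow> tau i xs ss = ss$i"
  using KKT_compl_componentwise[of i] by (simp add: tau_def)

lemma tau_kkt_neg:
  assumes "\<not> ss$i > 0"
  shows "tau i xs ss < 0"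
proof -
  have "ss$i = 0" using KKT_dual[rule_format, of i] assms by linarith
  then have "c xs $ i > 0" using strict_compl[rule_format, of i] by simp
  then show ?thesis using \<open>ss$i = 0\<close> rho_pos by (simp add: tau_def)
qed

lemma tau_kkt_nonzero: "tau i xs ss \<noteq> 0"
  using tau_kkt_pos tau_kkt_neg by (metis less_irrefl)

lemma smooth_plus_kkt: "smooth_plus \<rho> (tau i xs ss) 0 = ss$i"
proof (cases "ss$i > 0")
  case True
  then show ?thesis using tau_kkt_pos[OF True] by (simp add: smooth_plus_def)
next
  case False
  then have "ss$i = 0" using KKT_dual[rule_format, of i] by linarith
  then show ?thesis using tau_kkt_neg[OF False] by (simp add: smooth_plus_def)
qed

lemma smooth_plus_dt_kkt: "smooth_plus_dt \<rho> (tau i xs ss) 0 = (if ss$i > 0 then 1 else 0)"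
  using tau_kkt_pos[of i] tau_kkt_neg[of i] by (auto simp: smooth_plus_dt_def)

lemma gradF_kkt: "gradF xs ss 0 = 0"
  using KKT_stat by (simp add: gradF_def smooth_plus_kkt)

lemma hessF_kkt: "hessF xs ss 0 = Bstar"
proof -
  have "(\<Sum>i\<in>UNIV. smooth_plus_dt \<rho> (tau i xs ss) 0 *\<^sub>R outer (Dc i xs))
      = (\<Sum>i\<in>UNIV. if ss$i > 0 then outer (Dc i xs) else 0)"
    by (intro sum.cong) (simp_all add: smooth_plus_dt_kkt)
  also have "\<dots> = (\<Sum>i\<in>{i. ss$i > 0}. outer (Dc i xs))"
    by (simp add: sum.If_cases)
  finally have "(\<Sum>i\<in>UNIV. smooth_plus_dt \<rho> (tau i xs ss) 0 *\<^sub>R outer (Dc i xs))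
      = (\<Sum>i\<in>{i. ss$i > 0}. outer (Dc i xs))" .
  then show ?thesis by (simp add: hessF_def Bstar_def smooth_plus_kkt)
qed

text \<open>Strict complementarity makes every \<open>tau i xs ss\<close> nonzero, so near the KKT pair the
  penalty-barrier terms stay away from their kink at \<open>tau i x s = 0\<close>, \<open>\<mu> = 0\<close>.\<close>
definition tau_margin :: real where
  "tau_margin = Min (range (\<lambda>i. \<bar>tau i xs ss\<bar>)) / 2"

lemma tau_margin_pos: "tau_margin > 0"
  using tau_kkt_nonzero by (simp add: tau_margin_def Min_gr_iff)

lemma tau_margin_le: "2 * tau_margin \<le> \<bar>tau i xs ss\<bar>"
  unfolding tau_margin_def by simp

lemma isCont_tau_joint: "isCont (\<lambda>w. tau i (fst w) (fst (snd w))) (w :: (real^'n) \<times> (real^'m) \<times> real)"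
  by (rule has_derivative_continuous[OF has_derivative_tau_joint])

lemma isCont_Dc_joint: "isCont (\<lambda>w. Dc i (fst w)) (w :: (real^'n) \<times> (real^'m) \<times> real)"
  by (rule has_derivative_continuous[OF has_derivative_compose[OF
        has_derivative_fst[OF has_derivative_ident] c_hess]])

lemma isCont_hessF_joint:
  assumes "isCont Hf x" "\<forall>i. isCont (Hc i) x" "\<forall>i. (tau i x s)^2 + 4*\<rho>*\<mu> > 0"
  shows "isCont (\<lambda>w. hessF (fst w) (fst (snd w)) (snd (snd w))) (x, s, \<mu>)"
proof -
  have "isCont (\<lambda>w. Hf (fst w)) (x, s, \<mu>)" "isCont (\<lambda>w. Hc i (fst w)) (x, s, \<mu>)" for i
    using assms by (auto intro!: continuous_intros isCont_o2[OF continuous_fst[OF continuous_ident]])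
  moreover have "isCont (\<lambda>w. smooth_plus_dt \<rho> (tau i (fst w) (fst (snd w))) (snd (snd w))) (x, s, \<mu>)" for i
    using assms(3)[rule_format, of i]
    by (intro isCont_smooth_plus_dt isCont_tau_joint continuous_snd continuous_ident) simp
  ultimately show ?thesis unfolding hessF_def
    by (intro continuous_intros isCont_tau_joint isCont_Dc_joint) auto
qed

lemma isCont_gradF_jac:
  assumes "isCont Hf x" "\<forall>i. isCont (Hc i) x" "\<forall>i. (tau i x s)^2 + 4*\<rho>*\<mu> > 0"
  shows "isCont (\<lambda>w. gradF_jac w v) (x, s, \<mu>)"
proof -
  have "isCont (\<lambda>w. smooth_plus_dt \<rho> (tau i (fst w) (fst (snd w))) (snd (snd w))) (x, s, \<mu>)"
    "isCont (\<lambda>w. smooth_plus_dmu \<rho> (tau i (fst w) (fst (snd w))) (snd (snd w))) (x, s, \<mu>)" for i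
    using assms(3)[rule_format, of i]
    by (intro isCont_smooth_plus_dt isCont_smooth_plus_dmu isCont_tau_joint
        continuous_snd continuous_ident; simp)+
  then show ?thesis unfolding gradF_jac_def gradF_param_def
    by (intro continuous_intros isCont_hessF_joint[OF assms] isCont_Dc_joint) auto
qed

definition well_conditioned :: "real \<Rightarrow> ((real^'n) \<times> (real^'m) \<times> real) set" where
  "well_conditioned \<kappa> = {(x, s, \<mu>). isCont Hf x \<and> (\<forall>i. isCont (Hc i) x) \<and>
     (\<forall>i. tau_margin \<le> \<bar>tau i x s\<bar> \<and> (tau i x s)^2/2 \<le> (tau i x s)^2 + 4*\<rho>*\<mu>) \<and>
     (\<forall>v. \<kappa> * (norm v)^2 \<le> v \<bullet> (hessF x s \<mu> *v v)) \<and>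
     (\<forall>i. norm (Dc i x) \<le> norm (Dc i xs) + 1)}"

lemma well_conditioned_tau:
  assumes "(x, s, \<mu>) \<in> well_conditioned \<kappa>"
  shows "tau i x s \<noteq> 0" and "(tau i x s)^2 + 4*\<rho>*\<mu> > 0"
proof -
  have "tau_margin \<le> \<bar>tau i x s\<bar>" and le: "(tau i x s)^2/2 \<le> (tau i x s)^2 + 4*\<rho>*\<mu>"
    using assms by (auto simp: well_conditioned_def)
  then show "tau i x s \<noteq> 0" using tau_margin_pos by auto
  then have "(tau i x s)^2 > 0" by simp
  then show "(tau i x s)^2 + 4*\<rho>*\<mu> > 0" using le by linarith
qed

lemma mem_well_conditionedI:
  assumes "isCont Hf x" "\<forall>i. isCont (Hc i) x"
    and tau: "\<forall>i. \<bar>tau i x s - tau i xs ss\<bar> < tau_margin" and \<mu>: "\<bar>\<mu>\<bar> < tau_margin^2/(8*\<rho>)"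
    and B: "\<forall>v. 2*\<kappa> * (norm v)^2 \<le> v \<bullet> (Bstar *v v)"
    and hess: "(\<Sum>i\<in>UNIV. \<Sum>j\<in>UNIV. \<bar>(hessF x s \<mu> - Bstar)$i$j\<bar>) < \<kappa>"
    and Dc: "\<forall>i. norm (Dc i x - Dc i xs) < 1"
  shows "(x, s, \<mu>) \<in> well_conditioned \<kappa>"
proof -
  have "tau_margin \<le> \<bar>tau i x s\<bar>" for i
    using tau[rule_format, of i] tau_margin_le[of i] abs_triangle_ineq2[of "tau i xs ss" "tau i x s"]
    by (simp add: abs_minus_commute)
  moreover have "(tau i x s)^2/2 \<le> (tau i x s)^2 + 4*\<rho>*\<mu>" for i
    by (rule half_square_le_perturbed[OF rho_pos tau_margin_pos calculation \<mu>])
  moreover have "\<kappa> * (norm v)^2 \<le> v \<bullet> (hessF x s \<mu> *v v)" for v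
    using posdef_perturb[of "2*\<kappa>" Bstar "hessF x s \<mu>"] B hess by simp
  moreover have "norm (Dc i x) \<le> norm (Dc i xs) + 1" for i
    using norm_triangle_sub[of "Dc i x" "Dc i xs"] Dc[rule_format, of i] by linarith
  ultimately show ?thesis using assms(1,2) by (simp add: well_conditioned_def)
qed

lemma Bstar_uniformly_posdef:
  obtains \<kappa> where "\<kappa> > 0" "\<And>v. \<kappa> * (norm v)^2 \<le> v \<bullet> (Bstar *v v)"
proof (rule posdef_uniformly)
  show "v \<bullet> (Bstar *v v) > 0" if "v \<noteq> 0" for v using B_posdef that by (simp add: Bstar_def)
qed (rule that)

lemma eventually_well_conditioned:
  assumes "\<kappa> > 0" and \<kappa>: "\<forall>v. 2*\<kappa> * (norm v)^2 \<le> v \<bullet> (Bstar *v v)"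
  shows "\<forall>\<^sub>F w in nhds (xs, ss, 0). w \<in> well_conditioned \<kappa>"
proof -
  let ?w0 = "(xs, ss, 0::real)"
  obtain r where "r > 0" and r: "\<forall>x\<in>ball xs r. isCont Hf x \<and> (\<forall>i. isCont (Hc i) x)"
    using hess_cont by blast
  have hess_cont_w0: "isCont (\<lambda>w. hessF (fst w) (fst (snd w)) (snd (snd w))) ?w0"
    using r \<open>r > 0\<close> tau_kkt_nonzero by (intro isCont_hessF_joint) auto
  have "\<forall>\<^sub>F w in nhds ?w0. dist (fst w) xs < r"
    using \<open>r > 0\<close>
    by (intro eventually_less_nhds continuous_dist continuous_fst continuous_ident continuous_const)
      simp
  moreover have "\<forall>\<^sub>F w in nhds ?w0. \<forall>i. \<bar>tau i (fst w) (fst (snd w)) - tau i xs ss\<bar> < tau_margin"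
    using tau_margin_pos
    by (intro eventually_all_finite eventually_less_nhds continuous_rabs continuous_diff
        isCont_tau_joint continuous_const) simp
  moreover have "\<forall>\<^sub>F w in nhds ?w0. \<bar>snd (snd w)\<bar> < tau_margin^2/(8*\<rho>)"
    using tau_margin_pos rho_pos
    by (intro eventually_less_nhds continuous_rabs continuous_snd continuous_ident) simp
  moreover have "\<forall>\<^sub>F w in nhds ?w0.
      (\<Sum>i\<in>UNIV. \<Sum>j\<in>UNIV. \<bar>(hessF (fst w) (fst (snd w)) (snd (snd w)) - Bstar)$i$j\<bar>) < \<kappa>"
    using \<open>\<kappa> > 0\<close>
    by (intro eventually_less_nhds continuous_sum continuous_rabs continuous_component
        continuous_diff continuous_const hess_cont_w0) (simp_all add: hessF_kkt)
  moreover have "\<forall>\<^sub>F w in nhds ?w0. \<forall>i. norm (Dc i (fst w) - Dc i xs) < 1"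
    by (intro eventually_all_finite eventually_less_nhds continuous_norm continuous_diff
        isCont_Dc_joint continuous_const) simp
  ultimately show ?thesis
  proof eventually_elim
    case (elim w)
    then show ?case using r \<kappa>
      by (cases w) (auto simp: dist_commute intro!: mem_well_conditionedI)
  qed
qed

lemma well_conditioned_near_kkt:
  obtains \<kappa> e where "\<kappa> > 0" "e > 0" "ball xs e \<times> ball (ss, 0) e \<subseteq> well_conditioned \<kappa>"
proof -
  obtain \<kappa> where "\<kappa> > 0" "\<And>v. \<kappa> * (norm v)^2 \<le> v \<bullet> (Bstar *v v)"
    by (rule Bstar_uniformly_posdef) (rule that)
  then have "\<forall>\<^sub>F w in nhds (xs, ss, 0). w \<in> well_conditioned (\<kappa>/2)"
    by (intro eventually_well_conditioned) auto
  then obtain e where "e > 0" and e: "\<And>w. dist w (xs, ss, 0) < e \<Longrightarrow> w \<in> well_conditioned (\<kappa>/2)"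
    unfolding eventually_nhds_metric by blast
  have "ball xs (e/2) \<times> ball (ss, 0) (e/2) \<subseteq> well_conditioned (\<kappa>/2)"
  proof safe
    fix x s and \<mu> :: real assume "x \<in> ball xs (e/2)" "(s, \<mu>) \<in> ball (ss, 0) (e/2)"
    moreover have "dist (x, s, \<mu>) (xs, ss, 0) \<le> dist x xs + dist (s, \<mu>) (ss, 0)"
      using norm_Pair_le[of "x - xs" "(s, \<mu>) - (ss, 0)"] by (simp add: dist_norm)
    ultimately show "(x, s, \<mu>) \<in> well_conditioned (\<kappa>/2)" by (intro e) (simp add: dist_commute)
  qed
  then show thesis using \<open>\<kappa> > 0\<close> \<open>e > 0\<close> by (intro that[of "\<kappa>/2" "e/2"]) auto
qed

definition gradF_param_bound :: real where
  "gradF_param_bound = (\<Sum>i\<in>UNIV. (2 + 2*\<rho>/tau_margin) * (norm (Dc i xs) + 1))"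

lemma gradF_param_bound_nonneg: "gradF_param_bound \<ge> 0"
  unfolding gradF_param_bound_def using tau_margin_pos rho_pos by (intro sum_nonneg mult_nonneg_nonneg) auto

lemma norm_gradF_param_le:
  assumes "(x, s, \<mu>) \<in> well_conditioned \<kappa>"
  shows "norm (gradF_param x s \<mu> k m) \<le> gradF_param_bound * norm (k, m)"
proof -
  have "norm ((smooth_plus_dt \<rho> (tau i x s) \<mu> * k$i + smooth_plus_dmu \<rho> (tau i x s) \<mu> * m) *\<^sub>R Dc i x)
     \<le> ((2 + 2*\<rho>/tau_margin) * (norm (Dc i xs) + 1)) * norm (k, m)" for i
  proof -
    have "tau_margin \<le> \<bar>tau i x s\<bar>" "(tau i x s)^2/2 \<le> (tau i x s)^2 + 4*\<rho>*\<mu>"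
      and Dc: "norm (Dc i x) \<le> norm (Dc i xs) + 1"
      using assms by (auto simp: well_conditioned_def)
    note bounds = smooth_plus_derivative_bounds[OF rho_pos tau_margin_pos this(1,2)]
    have "\<bar>k$i\<bar> \<le> norm (k, m)" "\<bar>m\<bar> \<le> norm (k, m)"
      using component_le_norm_cart[of k i] norm_fst_le[of k m] norm_snd_le[of m k] by auto
    have "\<bar>smooth_plus_dt \<rho> (tau i x s) \<mu> * k$i + smooth_plus_dmu \<rho> (tau i x s) \<mu> * m\<bar>
        \<le> \<bar>smooth_plus_dt \<rho> (tau i x s) \<mu>\<bar> * \<bar>k$i\<bar> + \<bar>smooth_plus_dmu \<rho> (tau i x s) \<mu>\<bar> * \<bar>m\<bar>"
      unfolding abs_mult[symmetric] by (rule abs_triangle_ineq)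
    also have "\<dots> \<le> 2 * norm (k, m) + (2*\<rho>/tau_margin) * norm (k, m)"
      using bounds \<open>\<bar>k$i\<bar> \<le> norm (k, m)\<close> \<open>\<bar>m\<bar> \<le> norm (k, m)\<close>
      by (intro add_mono mult_mono) auto
    also have "\<dots> = (2 + 2*\<rho>/tau_margin) * norm (k, m)"
      by (simp add: algebra_simps)
    finally have "\<bar>smooth_plus_dt \<rho> (tau i x s) \<mu> * k$i + smooth_plus_dmu \<rho> (tau i x s) \<mu> * m\<bar>
        * norm (Dc i x) \<le> ((2 + 2*\<rho>/tau_margin) * norm (k, m)) * (norm (Dc i xs) + 1)"
      using Dc tau_margin_pos rho_pos by (intro mult_mono) auto
    then show ?thesis by (simp add: mult_ac)
  qed
  then have "norm (gradF_param x s \<mu> k m)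
      \<le> (\<Sum>i\<in>UNIV. ((2 + 2*\<rho>/tau_margin) * (norm (Dc i xs) + 1)) * norm (k, m))"
    unfolding gradF_param_def by (intro order_trans[OF norm_sum sum_mono])
  also have "\<dots> = gradF_param_bound * norm (k, m)"
    by (simp add: gradF_param_bound_def sum_distrib_right)
  finally show ?thesis .
qed

lemma gradF_jac_bounded_below:
  assumes "w \<in> well_conditioned \<kappa>" and "\<kappa> > 0"
  shows "\<kappa> / (1 + gradF_param_bound + \<kappa>) * norm v \<le> norm (gradF_jac w v, snd v)"
proof -
  obtain x s \<mu> where w_eq: "w = (x, s, \<mu>)" by (metis prod.collapse)
  with assms(1) have w: "(x, s, \<mu>) \<in> well_conditioned \<kappa>" by simp
  obtain h k m where v: "v = (h, k, m)" by (metis prod.collapse)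
  define N where "N = norm (gradF_jac (x, s, \<mu>) v, snd v)"
  have Nkm: "norm (k, m) \<le> N" and Njac: "norm (gradF_jac (x, s, \<mu>) v) \<le> N"
    unfolding N_def v by (simp_all add: norm_snd_le norm_fst_le)
  have "\<kappa> * (norm h)^2 \<le> h \<bullet> (hessF x s \<mu> *v h)"
    using w by (simp add: well_conditioned_def)
  also have "\<dots> \<le> norm h * norm (hessF x s \<mu> *v h)" by (rule Cauchy_Schwarz_ineq2[THEN abs_le_D1])
  finally have "\<kappa> * norm h \<le> norm (hessF x s \<mu> *v h)"
    by (cases "h = 0") (simp_all add: power2_eq_square mult_ac)
  also have "\<dots> \<le> norm (gradF_jac (x, s, \<mu>) v) + norm (gradF_param x s \<mu> k m)"
    using norm_triangle_sub[of "hessF x s \<mu> *v h" "gradF_param x s \<mu> k m"]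
    by (simp add: gradF_jac_def v)
  also have "\<dots> \<le> N + gradF_param_bound * N"
    by (intro add_mono[OF Njac order_trans[OF norm_gradF_param_le[OF w]]]
        mult_left_mono[OF Nkm gradF_param_bound_nonneg])
  finally have "\<kappa> * norm h \<le> N + gradF_param_bound * N" .
  moreover have "\<kappa> * norm (k, m) \<le> \<kappa> * N" using Nkm \<open>\<kappa> > 0\<close> by simp
  moreover have "\<kappa> * norm v \<le> \<kappa> * norm h + \<kappa> * norm (k, m)"
    using norm_Pair_le[of h "(k, m)"] \<open>\<kappa> > 0\<close> by (simp add: v distrib_left[symmetric])
  ultimately have "\<kappa> * norm v \<le> (1 + gradF_param_bound + \<kappa>) * N" by (simp add: algebra_simps)
  then show ?thesis
    unfolding N_def w_eq using \<open>\<kappa> > 0\<close> gradF_param_bound_nonneg by (simp add: field_simps)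
qed

lemma gradF_has_derivative:
  assumes "\<forall>i. (tau i x s)^2 + 4*\<rho>*\<mu> > 0"
  shows "((\<lambda>x. gradF x s \<mu>) has_derivative (\<lambda>h. hessF x s \<mu> *v h)) (at x)"
proof -
  have "((\<lambda>x. gradF_joint (x, s, \<mu>)) has_derivative (\<lambda>h. gradF_jac (x, s, \<mu>) (h, 0))) (at x)"
    using assms by (intro has_derivative_compose[OF has_derivative_Pair[OF has_derivative_ident
          has_derivative_const] gradF_joint_has_derivative]) simp
  then show ?thesis by (simp add: gradF_joint_def gradF_jac_def gradF_param_def zero_prod_def)
qed

lemma bounded_linear_gradF_jac: "bounded_linear (gradF_jac w)"
proof -
  have "linear (gradF_jac w)"
    by (rule linearI) (simp_all add: gradF_jac_def gradF_param_def matrix_vector_right_distrib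
        matrix_vector_mult_scaleR algebra_simps sum.distrib scaleR_sum_right)
  then show ?thesis by (rule linear_conv_bounded_linear[THEN iffD1])
qed

lemma blinfun_apply_Blinfun_gradF_jac [simp]: "blinfun_apply (Blinfun (gradF_jac w)) = gradF_jac w"
  by (rule bounded_linear_Blinfun_apply[OF bounded_linear_gradF_jac])

lemma gradF_joint_has_derivative_well_conditioned:
  "w \<in> well_conditioned \<kappa> \<Longrightarrow> (gradF_joint has_derivative gradF_jac w) (at w)"
  using well_conditioned_tau(2) by (cases w) (auto intro!: gradF_joint_has_derivative)

lemma continuous_on_gradF_jac:
  assumes "U \<subseteq> well_conditioned \<kappa>"
  shows "continuous_on U (\<lambda>w. Blinfun (gradF_jac w))"
proof (rule continuous_on_blinfun_componentwise)
  fix v :: "(real^'n) \<times> (real^'m) \<times> real"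
  have "isCont (\<lambda>w. gradF_jac w v) w" if "w \<in> U" for w
  proof (cases w)
    case (fields x s \<mu>)
    then have "(x, s, \<mu>) \<in> well_conditioned \<kappa>" using assms that by auto
    then show ?thesis unfolding fields
      using well_conditioned_tau(2) by (intro isCont_gradF_jac) (auto simp: well_conditioned_def)
  qed
  then show "continuous_on U (\<lambda>w. blinfun_apply (Blinfun (gradF_jac w)) v)"
    by (auto intro!: continuous_at_imp_continuous_on)
qed

lemma stationary_point_map:
  obtains \<kappa> e \<delta> X X' where "\<kappa> > 0" "e > 0" "\<delta> > 0"
    "ball xs e \<times> ball (ss, 0::real) \<delta> \<subseteq> well_conditioned \<kappa>"
    "\<And>p. p \<in> ball (ss, 0) \<delta> \<Longrightarrow> X p \<in> ball xs e \<and> gradF (X p) (fst p) (snd p) = 0"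
    "\<And>p. p \<in> ball (ss, 0) \<delta> \<Longrightarrow> (X has_derivative blinfun_apply (X' p)) (at p)"
    "continuous_on (ball (ss, 0) \<delta>) X'"
proof -
  obtain \<kappa> e where "\<kappa> > 0" "e > 0" and W: "ball xs e \<times> ball (ss, 0) e \<subseteq> well_conditioned \<kappa>"
    by (rule well_conditioned_near_kkt)
  define U where "U = ball xs e \<times> ball (ss, 0::real) e"
  have inW: "w \<in> well_conditioned \<kappa>" if "w \<in> U" for w using W that by (auto simp: U_def)
  have "open U" "(xs, ss, 0) \<in> U" "gradF_joint (xs, ss, 0) = 0"
    using \<open>e > 0\<close> by (auto simp: U_def gradF_joint_def gradF_kkt open_Times)
  moreover have "(gradF_joint has_derivative blinfun_apply (Blinfun (gradF_jac w))) (at w)"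
    if "w \<in> U" for w
    using gradF_joint_has_derivative_well_conditioned[OF inW[OF that]] by simp
  moreover have "continuous_on U (\<lambda>w. Blinfun (gradF_jac w))"
    using inW by (intro continuous_on_gradF_jac) blast
  moreover have "\<kappa> / (1 + gradF_param_bound + \<kappa>) > 0"
    using \<open>\<kappa> > 0\<close> gradF_param_bound_nonneg by simp
  moreover have "\<kappa> / (1 + gradF_param_bound + \<kappa>) * norm v \<le> norm (Blinfun (gradF_jac w) v, snd v)"
    if "w \<in> U" for w v
    using gradF_jac_bounded_below[OF inW[OF that] \<open>\<kappa> > 0\<close>] by simp
  ultimately obtain \<delta> X X' where "\<delta> > 0"
    and X: "\<And>p. p \<in> ball (ss, 0) \<delta> \<Longrightarrow> (X p, p) \<in> U \<and> gradF_joint (X p, p) = 0"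
    and X': "\<And>p. p \<in> ball (ss, 0) \<delta> \<Longrightarrow> (X has_derivative blinfun_apply (X' p)) (at p)"
      "continuous_on (ball (ss, 0) \<delta>) X'"
    by (rule implicit_function_C1) (assumption | rule that)+
  show thesis
  proof (rule that[OF \<open>\<kappa> > 0\<close> \<open>e > 0\<close>, of "min \<delta> e" X X'])
    show "ball xs e \<times> ball (ss, 0) (min \<delta> e) \<subseteq> well_conditioned \<kappa>" using W by auto
    show "X p \<in> ball xs e \<and> gradF (X p) (fst p) (snd p) = 0" if "p \<in> ball (ss, 0) (min \<delta> e)" for p
      using X[of p] that by (auto simp: U_def gradF_joint_def)
    show "(X has_derivative blinfun_apply (X' p)) (at p)" if "p \<in> ball (ss, 0) (min \<delta> e)" for p
      using X'(1)[of p] that by auto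
    show "continuous_on (ball (ss, 0) (min \<delta> e)) X'"
      using X'(2) by (rule continuous_on_subset) auto
  qed (use \<open>\<delta> > 0\<close> \<open>e > 0\<close> in auto)
qed

lemma stationary_point_strict_min:
  assumes W: "ball xs e \<times> {(s, \<mu>)} \<subseteq> well_conditioned \<kappa>" and "\<kappa> > 0" "\<mu> \<ge> 0"
    and x0: "x0 \<in> ball xs e" "gradF x0 s \<mu> = 0" and x: "x \<in> ball xs e" "x \<noteq> x0"
  shows "Ffun f c x0 s \<mu> \<rho> < Ffun f c x s \<mu> \<rho>"
proof (rule strongly_convex_strict_min[where Gr = "\<lambda>x. gradF x s \<mu>" and Gr' = "\<lambda>x h. hessF x s \<mu> *v h",
      OF convex_ball _ _ _ \<open>\<kappa> > 0\<close> x0 x])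
  fix y assume "y \<in> ball xs e"
  then have y: "(y, s, \<mu>) \<in> well_conditioned \<kappa>" using W by auto
  show "((\<lambda>x. Ffun f c x s \<mu> \<rho>) has_derivative (\<lambda>h. gradF y s \<mu> \<bullet> h)) (at y)"
    using \<open>\<mu> \<ge> 0\<close> well_conditioned_tau(1)[OF y] by (intro F_has_derivative) auto
  show "((\<lambda>x. gradF x s \<mu>) has_derivative (\<lambda>h. hessF y s \<mu> *v h)) (at y)"
    using well_conditioned_tau(2)[OF y] by (intro gradF_has_derivative) auto
  show "\<kappa> * (norm v)^2 \<le> v \<bullet> (hessF y s \<mu> *v v)" for v
    using y by (simp add: well_conditioned_def)
qed

lemma stationary_point_unique_min:
  assumes "ball xs e \<times> {(s, \<mu>)} \<subseteq> well_conditioned \<kappa>" "\<kappa> > 0" "\<mu> \<ge> 0"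
    and "x0 \<in> ball xs e" "gradF x0 s \<mu> = 0"
  shows "\<forall>x\<in>ball xs e. Ffun f c x0 s \<mu> \<rho> \<le> Ffun f c x s \<mu> \<rho>"
    and "\<forall>x\<in>ball xs e. Ffun f c x s \<mu> \<rho> \<le> Ffun f c x0 s \<mu> \<rho> \<longrightarrow> x = x0"
proof (safe)
  fix x assume "x \<in> ball xs e"
  note strict = stationary_point_strict_min[OF assms this]
  show "Ffun f c x0 s \<mu> \<rho> \<le> Ffun f c x s \<mu> \<rho>" using strict by (cases "x = x0") auto
  show "x = x0" if "Ffun f c x s \<mu> \<rho> \<le> Ffun f c x0 s \<mu> \<rho>"
    using strict that by (cases "x = x0") auto
qed

lemma c_component_lipschitz:
  assumes Dc: "\<forall>y\<in>ball xs e. norm (Dc i y) \<le> norm (Dc i xs) + 1" and x: "x \<in> ball xs e"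
  shows "\<bar>c x $ i - c xs $ i\<bar> \<le> (norm (Dc i xs) + 1) * norm (x - xs)"
proof -
  have "xs \<in> ball xs e" using x by (auto intro: le_less_trans[OF zero_le_dist])
  have "norm (c x $ i - c xs $ i) \<le> (norm (Dc i xs) + 1) * norm (x - xs)"
  proof (rule differentiable_bound[OF convex_ball _ _ x \<open>xs \<in> ball xs e\<close>])
    fix y assume y: "y \<in> ball xs e"
    show "((\<lambda>x. c x $ i) has_derivative (\<lambda>h. Dc i y \<bullet> h)) (at y within ball xs e)"
      by (rule has_derivative_at_withinI[OF c_grad])
    show "onorm (\<lambda>h. Dc i y \<bullet> h) \<le> norm (Dc i xs) + 1"
    proof (rule onorm_le)
      fix h
      have "norm (Dc i y \<bullet> h) \<le> norm (Dc i y) * norm h" by (simp add: Cauchy_Schwarz_ineq2)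
      also have "\<dots> \<le> (norm (Dc i xs) + 1) * norm h" using Dc y by (intro mult_right_mono) auto
      finally show "norm (Dc i y \<bullet> h) \<le> (norm (Dc i xs) + 1) * norm h" .
    qed
  qed
  then show ?thesis by simp
qed

lemma norm_gradF_kkt_point_le:
  assumes "\<mu> \<ge> 0" and tau: "\<forall>i. tau_margin \<le> \<bar>tau i xs s\<bar>"
  shows "norm (gradF xs s \<mu>) \<le> (\<Sum>i\<in>UNIV. norm (Dc i xs)) * (1 + 2*\<rho>/tau_margin) * (norm (s - ss) + \<mu>)"
proof -
  have "gradF xs s \<mu> = gradF xs s \<mu> - gradF xs ss 0" using gradF_kkt by simp
  also have "\<dots> = (\<Sum>i\<in>UNIV. (smooth_plus \<rho> (tau i xs ss) 0 - smooth_plus \<rho> (tau i xs s) \<mu>) *\<^sub>R Dc i xs)"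
    unfolding gradF_def by (simp add: sum_subtractf scaleR_diff_left)
  finally have eq: "gradF xs s \<mu> = \<dots>" .
  have "\<bar>smooth_plus \<rho> (tau i xs s) \<mu> - smooth_plus \<rho> (tau i xs ss) 0\<bar> \<le> (1 + 2*\<rho>/tau_margin) * (norm (s - ss) + \<mu>)"
    for i
  proof -
    have "\<bar>smooth_plus \<rho> (tau i xs s) \<mu> - smooth_plus \<rho> (tau i xs ss) 0\<bar>
        \<le> \<bar>tau i xs s - tau i xs ss\<bar> + 2*\<rho>*\<mu>/tau_margin"
      using smooth_plus_dist_le[OF rho_pos tau_margin_pos \<open>\<mu> \<ge> 0\<close>] tau by blast
    also have "\<bar>tau i xs s - tau i xs ss\<bar> \<le> norm (s - ss)"
      using component_le_norm_cart[of "s - ss" i] by (simp add: tau_def)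
    also have "norm (s - ss) + 2*\<rho>*\<mu>/tau_margin \<le> (1 + 2*\<rho>/tau_margin) * (norm (s - ss) + \<mu>)"
    proof -
      have "0 \<le> 2*\<rho>/tau_margin * norm (s - ss) + \<mu>" using \<open>\<mu> \<ge> 0\<close> tau_margin_pos rho_pos by simp
      then show ?thesis by (simp add: algebra_simps add_divide_distrib)
    qed
    finally show ?thesis by simp
  qed
  then have "norm (gradF xs s \<mu>) \<le> (\<Sum>i\<in>UNIV. norm (Dc i xs) * ((1 + 2*\<rho>/tau_margin) * (norm (s - ss) + \<mu>)))"
    unfolding eq
    by (intro order_trans[OF norm_sum sum_mono]) (simp add: abs_minus_commute mult.commute mult_left_mono)
  also have "\<dots> = (\<Sum>i\<in>UNIV. norm (Dc i xs)) * ((1 + 2*\<rho>/tau_margin) * (norm (s - ss) + \<mu>))"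
    by (rule sum_distrib_right[symmetric])
  finally show ?thesis by (simp only: mult.assoc)
qed

lemma multiplier_error_le:
  assumes "\<mu> \<ge> 0" and tau: "\<forall>i. tau_margin \<le> \<bar>tau i x s\<bar>"
    and c_lip: "\<forall>i. \<bar>c x $ i - c xs $ i\<bar> \<le> (norm (Dc i xs) + 1) * norm (x - xs)"
  shows "norm (\<rho> *\<^sub>R yvec c x s \<mu> \<rho> - ss) \<le> real CARD('m) * (1 + 2*\<rho>/tau_margin) * (norm (s - ss) + \<mu>)
     + \<rho> * (\<Sum>i\<in>UNIV. norm (Dc i xs) + 1) * norm (x - xs)"
proof -
  have "\<bar>(\<rho> *\<^sub>R yvec c x s \<mu> \<rho> - ss) $ i\<bar> \<le> (1 + 2*\<rho>/tau_margin) * (norm (s - ss) + \<mu>)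
      + \<rho> * (norm (Dc i xs) + 1) * norm (x - xs)" for i
  proof -
    have "(\<rho> *\<^sub>R yvec c x s \<mu> \<rho> - ss) $ i = smooth_plus \<rho> (tau i x s) \<mu> - smooth_plus \<rho> (tau i xs ss) 0"
      using yfun_eq_smooth_plus[OF rho_pos, of c x s \<mu> i] smooth_plus_kkt[of i]
      by (simp add: yvec_def tau_def)
    also have "\<bar>\<dots>\<bar> \<le> \<bar>tau i x s - tau i xs ss\<bar> + 2*\<rho>*\<mu>/tau_margin"
      using smooth_plus_dist_le[OF rho_pos tau_margin_pos \<open>\<mu> \<ge> 0\<close>] tau by blast
    also have "\<bar>tau i x s - tau i xs ss\<bar> \<le> norm (s - ss) + \<rho> * ((norm (Dc i xs) + 1) * norm (x - xs))"
    proof -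
      have "tau i x s - tau i xs ss = (s - ss) $ i - \<rho> * (c x $ i - c xs $ i)"
        by (simp add: tau_def algebra_simps)
      then have "\<bar>tau i x s - tau i xs ss\<bar> \<le> \<bar>(s - ss) $ i\<bar> + \<bar>\<rho> * (c x $ i - c xs $ i)\<bar>"
        by (simp add: abs_triangle_ineq4)
      also have "\<dots> = \<bar>(s - ss) $ i\<bar> + \<rho> * \<bar>c x $ i - c xs $ i\<bar>"
        using rho_pos by (simp add: abs_mult)
      also have "\<dots> \<le> norm (s - ss) + \<rho> * ((norm (Dc i xs) + 1) * norm (x - xs))"
        using component_le_norm_cart[of "s - ss" i] c_lip rho_pos
        by (intro add_mono mult_left_mono) auto
      finally show ?thesis .
    qed
    also have "norm (s - ss) + \<rho> * ((norm (Dc i xs) + 1) * norm (x - xs)) + 2*\<rho>*\<mu>/tau_margin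
        \<le> (1 + 2*\<rho>/tau_margin) * (norm (s - ss) + \<mu>) + \<rho> * (norm (Dc i xs) + 1) * norm (x - xs)"
    proof -
      have "0 \<le> 2*\<rho>/tau_margin * norm (s - ss) + \<mu>" using \<open>\<mu> \<ge> 0\<close> tau_margin_pos rho_pos by simp
      then show ?thesis by (simp add: algebra_simps add_divide_distrib)
    qed
    finally show ?thesis by simp
  qed
  then have "norm (\<rho> *\<^sub>R yvec c x s \<mu> \<rho> - ss) \<le> (\<Sum>i\<in>UNIV. (1 + 2*\<rho>/tau_margin) * (norm (s - ss) + \<mu>)
      + \<rho> * (norm (Dc i xs) + 1) * norm (x - xs))"
    by (intro order_trans[OF norm_le_l1_cart sum_mono])
  also have "\<dots> = real CARD('m) * (1 + 2*\<rho>/tau_margin) * (norm (s - ss) + \<mu>)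
     + \<rho> * (\<Sum>i\<in>UNIV. norm (Dc i xs) + 1) * norm (x - xs)"
    by (simp add: sum.distrib sum_distrib_left[symmetric] sum_distrib_right[symmetric] mult.assoc)
  finally show ?thesis .
qed

lemma stationary_point_dist_le:
  assumes W: "ball xs e \<times> {(s, \<mu>)} \<subseteq> well_conditioned \<kappa>" and "\<mu> \<ge> 0"
    and x: "x \<in> ball xs e" "gradF x s \<mu> = 0"
  shows "\<kappa> * norm (x - xs) \<le> (\<Sum>i\<in>UNIV. norm (Dc i xs)) * (1 + 2*\<rho>/tau_margin) * (norm (s - ss) + \<mu>)"
proof -
  have Wy: "(y, s, \<mu>) \<in> well_conditioned \<kappa>" if "y \<in> ball xs e" for y using W that by auto
  have xs: "xs \<in> ball xs e" using x(1) by (auto intro: le_less_trans[OF zero_le_dist])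
  have "\<kappa> * (norm (x - xs))^2 \<le> (gradF x s \<mu> - gradF xs s \<mu>) \<bullet> (x - xs)"
  proof (rule strongly_monotone_if_derivative_coercive[where Gr' = "\<lambda>y h. hessF y s \<mu> *v h",
        OF convex_ball _ _ x(1) xs])
    fix y assume "y \<in> ball xs e"
    note y = Wy[OF this]
    show "((\<lambda>x. gradF x s \<mu>) has_derivative (\<lambda>h. hessF y s \<mu> *v h)) (at y)"
      using well_conditioned_tau(2)[OF y] by (intro gradF_has_derivative) auto
    show "\<kappa> * (norm v)^2 \<le> v \<bullet> (hessF y s \<mu> *v v)" for v
      using y by (simp add: well_conditioned_def)
  qed
  also have "\<dots> \<le> norm (gradF xs s \<mu>) * norm (x - xs)"
    using x(2) by (simp add: Cauchy_Schwarz_ineq2 abs_le_D2)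
  finally have "\<kappa> * norm (x - xs) \<le> norm (gradF xs s \<mu>)"
    by (cases "x = xs") (simp_all add: power2_eq_square mult_ac)
  also have "\<dots> \<le> (\<Sum>i\<in>UNIV. norm (Dc i xs)) * (1 + 2*\<rho>/tau_margin) * (norm (s - ss) + \<mu>)"
    using Wy[OF xs] \<open>\<mu> \<ge> 0\<close> by (intro norm_gradF_kkt_point_le) (auto simp: well_conditioned_def)
  finally show ?thesis .
qed

lemma stationary_point_error_bounds:
  assumes W: "ball xs e \<times> ball (ss, 0::real) \<delta> \<subseteq> well_conditioned \<kappa>" and "\<kappa> > 0"
  obtains C where "C > 0"
    "\<And>s \<mu> x. (s, \<mu>) \<in> ball (ss, 0) \<delta> \<Longrightarrow> \<mu> \<ge> 0 \<Longrightarrow> x \<in> ball xs e \<Longrightarrow> gradF x s \<mu> = 0 \<Longrightarrow>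
       norm (x - xs) \<le> C * (norm (s - ss) + \<mu>) \<and>
       norm (\<rho> *\<^sub>R yvec c x s \<mu> \<rho> - ss) \<le> C * (norm (s - ss) + \<mu>)"
proof -
  define K where "K = (\<Sum>i\<in>UNIV. norm (Dc i xs)) * (1 + 2*\<rho>/tau_margin) / \<kappa>"
  define L where "L = real CARD('m) * (1 + 2*\<rho>/tau_margin) + \<rho> * (\<Sum>i\<in>UNIV. norm (Dc i xs) + 1) * K"
  have "K \<ge> 0" unfolding K_def using \<open>\<kappa> > 0\<close> tau_margin_pos rho_pos by (simp add: sum_nonneg)
  then have "L \<ge> 0" unfolding L_def using tau_margin_pos rho_pos by (simp add: sum_nonneg add_nonneg_nonneg)
  have bounds: "norm (x - xs) \<le> K * (norm (s - ss) + \<mu>) \<and>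
      norm (\<rho> *\<^sub>R yvec c x s \<mu> \<rho> - ss) \<le> L * (norm (s - ss) + \<mu>)"
    if p: "(s, \<mu>) \<in> ball (ss, 0) \<delta>" and "\<mu> \<ge> 0" and x: "x \<in> ball xs e" "gradF x s \<mu> = 0"
    for s \<mu> x
  proof -
    have W': "ball xs e \<times> {(s, \<mu>)} \<subseteq> well_conditioned \<kappa>" using W p by auto
    then have x_bound: "norm (x - xs) \<le> K * (norm (s - ss) + \<mu>)"
      using stationary_point_dist_le[OF _ \<open>\<mu> \<ge> 0\<close> x] \<open>\<kappa> > 0\<close>
      unfolding K_def by (simp add: field_simps)
    have "norm (\<rho> *\<^sub>R yvec c x s \<mu> \<rho> - ss) \<le> real CARD('m) * (1 + 2*\<rho>/tau_margin) * (norm (s - ss) + \<mu>)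
        + \<rho> * (\<Sum>i\<in>UNIV. norm (Dc i xs) + 1) * norm (x - xs)"
    proof (rule multiplier_error_le[OF \<open>\<mu> \<ge> 0\<close>])
      have Wy: "(y, s, \<mu>) \<in> well_conditioned \<kappa>" if "y \<in> ball xs e" for y using W' that by auto
      show "\<forall>i. tau_margin \<le> \<bar>tau i x s\<bar>" using Wy[OF x(1)] by (simp add: well_conditioned_def)
      have "\<forall>i. \<forall>y\<in>ball xs e. norm (Dc i y) \<le> norm (Dc i xs) + 1"
        using Wy by (simp add: well_conditioned_def)
      then show "\<forall>i. \<bar>c x $ i - c xs $ i\<bar> \<le> (norm (Dc i xs) + 1) * norm (x - xs)"
        using c_component_lipschitz x(1) by blast
    qed
    also have "\<dots> \<le> real CARD('m) * (1 + 2*\<rho>/tau_margin) * (norm (s - ss) + \<mu>)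
        + \<rho> * (\<Sum>i\<in>UNIV. norm (Dc i xs) + 1) * (K * (norm (s - ss) + \<mu>))"
      using x_bound rho_pos
      by (intro add_left_mono mult_left_mono mult_nonneg_nonneg sum_nonneg add_nonneg_nonneg) auto
    also have "\<dots> = L * (norm (s - ss) + \<mu>)"
      by (simp add: L_def algebra_simps)
    finally show ?thesis using x_bound by simp
  qed
  show thesis
  proof (rule that[of "K + L + 1"])
    fix s \<mu> x assume "(s, \<mu>) \<in> ball (ss, 0) \<delta>" "\<mu> \<ge> 0" "x \<in> ball xs e" "gradF x s \<mu> = 0"
    moreover have "K * (norm (s - ss) + \<mu>) \<le> (K + L + 1) * (norm (s - ss) + \<mu>)"
      "L * (norm (s - ss) + \<mu>) \<le> (K + L + 1) * (norm (s - ss) + \<mu>)"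
      using \<open>K \<ge> 0\<close> \<open>L \<ge> 0\<close> \<open>\<mu> \<ge> 0\<close> by (intro mult_right_mono; simp)+
    ultimately show "norm (x - xs) \<le> (K + L + 1) * (norm (s - ss) + \<mu>) \<and>
        norm (\<rho> *\<^sub>R yvec c x s \<mu> \<rho> - ss) \<le> (K + L + 1) * (norm (s - ss) + \<mu>)"
      using bounds by (meson order_trans)
  qed (use \<open>K \<ge> 0\<close> \<open>L \<ge> 0\<close> in simp)
qed

theorem local_minimizer_map:
  "\<exists>\<mu>b>0. \<exists>\<epsilon>>0. \<exists>\<delta>>0.
     (let D = {(s, \<mu>). norm (s - ss) \<le> \<delta> \<and> 0 \<le> \<mu> \<and> \<mu> < \<mu>b} in
      \<exists>xf :: (real^'m) \<times> real \<Rightarrow> real^'n.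
        (\<forall>(s, \<mu>)\<in>D. xf (s, \<mu>) \<in> ball xs \<epsilon> \<and>
            (\<forall>x\<in>ball xs \<epsilon>. Ffun f c (xf (s, \<mu>)) s \<mu> \<rho> \<le> Ffun f c x s \<mu> \<rho>) \<and>
            (\<forall>x\<in>ball xs \<epsilon>. Ffun f c x s \<mu> \<rho> \<le> Ffun f c (xf (s, \<mu>)) s \<mu> \<rho> \<longrightarrow> x = xf (s, \<mu>)))
        \<and> (\<exists>D' :: (real^'m) \<times> real \<Rightarrow> (((real^'m) \<times> real) \<Rightarrow>\<^sub>L (real^'n)).
              (\<forall>p\<in>interior D. (xf has_derivative blinfun_apply (D' p)) (at p))
              \<and> continuous_on (interior D) D')
        \<and> (\<exists>C>0. \<forall>(s, \<mu>)\<in>D.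
              norm (xf (s, \<mu>) - xs) \<le> C * (norm (s - ss) + \<mu>) \<and>
              norm (\<rho> *\<^sub>R yvec c (xf (s, \<mu>)) s \<mu> \<rho> - ss) \<le> C * (norm (s - ss) + \<mu>)))"
proof -
  obtain \<kappa> e \<delta> X X' where "\<kappa> > 0" "e > 0" "\<delta> > 0"
    and W: "ball xs e \<times> ball (ss, 0) \<delta> \<subseteq> well_conditioned \<kappa>"
    and X: "\<And>p. p \<in> ball (ss, 0) \<delta> \<Longrightarrow> X p \<in> ball xs e \<and> gradF (X p) (fst p) (snd p) = 0"
    and X': "\<And>p. p \<in> ball (ss, 0) \<delta> \<Longrightarrow> (X has_derivative blinfun_apply (X' p)) (at p)"
      "continuous_on (ball (ss, 0) \<delta>) X'"
    by (rule stationary_point_map) (rule that)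
  obtain C where "C > 0" and C: "\<And>s \<mu> x. (s, \<mu>) \<in> ball (ss, 0) \<delta> \<Longrightarrow> \<mu> \<ge> 0 \<Longrightarrow> x \<in> ball xs e \<Longrightarrow>
      gradF x s \<mu> = 0 \<Longrightarrow> norm (x - xs) \<le> C * (norm (s - ss) + \<mu>) \<and>
      norm (\<rho> *\<^sub>R yvec c x s \<mu> \<rho> - ss) \<le> C * (norm (s - ss) + \<mu>)"
    by (rule stationary_point_error_bounds[OF W \<open>\<kappa> > 0\<close>]) (rule that)
  define D where "D = {(s, \<mu>). norm (s - ss) \<le> \<delta>/2 \<and> 0 \<le> \<mu> \<and> \<mu> < \<delta>/2}"
  have D: "(s, \<mu>) \<in> ball (ss, 0) \<delta> \<and> \<mu> \<ge> 0" if "(s, \<mu>) \<in> D" for s \<mu>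
    using that box_subset_ball[of ss "\<delta>/2"] by (auto simp: D_def)
  have min: "\<forall>(s, \<mu>)\<in>D. X (s, \<mu>) \<in> ball xs e \<and>
      (\<forall>x\<in>ball xs e. Ffun f c (X (s, \<mu>)) s \<mu> \<rho> \<le> Ffun f c x s \<mu> \<rho>) \<and>
      (\<forall>x\<in>ball xs e. Ffun f c x s \<mu> \<rho> \<le> Ffun f c (X (s, \<mu>)) s \<mu> \<rho> \<longrightarrow> x = X (s, \<mu>))"
  proof (intro ballI, clarify)
    fix s \<mu> assume "(s, \<mu>) \<in> D"
    then have p: "(s, \<mu>) \<in> ball (ss, 0) \<delta>" and "\<mu> \<ge> 0" using D by blast+
    have "ball xs e \<times> {(s, \<mu>)} \<subseteq> well_conditioned \<kappa>" using W p by auto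
    with X[OF p] \<open>\<kappa> > 0\<close> \<open>\<mu> \<ge> 0\<close> show "X (s, \<mu>) \<in> ball xs e \<and>
        (\<forall>x\<in>ball xs e. Ffun f c (X (s, \<mu>)) s \<mu> \<rho> \<le> Ffun f c x s \<mu> \<rho>) \<and>
        (\<forall>x\<in>ball xs e. Ffun f c x s \<mu> \<rho> \<le> Ffun f c (X (s, \<mu>)) s \<mu> \<rho> \<longrightarrow> x = X (s, \<mu>))"
      using stationary_point_unique_min by simp
  qed
  have "interior D \<subseteq> ball (ss, 0) \<delta>" using D interior_subset by fast
  then have derivative: "\<forall>p\<in>interior D. (X has_derivative blinfun_apply (X' p)) (at p)"
    and continuity: "continuous_on (interior D) X'"
    using X' continuous_on_subset by blast+
  have bounds: "\<forall>(s, \<mu>)\<in>D. norm (X (s, \<mu>) - xs) \<le> C * (norm (s - ss) + \<mu>) \<and>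
      norm (\<rho> *\<^sub>R yvec c (X (s, \<mu>)) s \<mu> \<rho> - ss) \<le> C * (norm (s - ss) + \<mu>)"
    using C X D by fastforce
  show ?thesis unfolding Let_def
    by (rule exI[of _ "\<delta>/2"], rule conjI, use \<open>\<delta> > 0\<close> in simp, rule exI[of _ e],
        rule conjI[OF \<open>e > 0\<close>], rule exI[of _ "\<delta>/2"], rule conjI, use \<open>\<delta> > 0\<close> in simp,
        rule exI[of _ X], unfold D_def[symmetric],
        intro conjI min exI[of _ X'] derivative continuity exI[of _ C] \<open>C > 0\<close> bounds)
qed
end

theorem theorem5p2:
  fixes f :: "real^'n \<Rightarrow> real" and c :: "real^'n \<Rightarrow> real^'m"
    and Df :: "real^'n \<Rightarrow> real^'n" and Hf :: "real^'n \<Rightarrow> real^'n^'n"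
    and Dc :: "'m \<Rightarrow> real^'n \<Rightarrow> real^'n" and Hc :: "'m \<Rightarrow> real^'n \<Rightarrow> real^'n^'n"
    and xs :: "real^'n" and ss :: "real^'m" and \<rho>0 :: real
  assumes f_grad: "\<And>x. (f has_derivative (\<lambda>h. Df x \<bullet> h)) (at x)"
    and f_hess: "\<And>x. (Df has_derivative (\<lambda>h. Hf x *v h)) (at x)"
    and c_grad: "\<And>i x. ((\<lambda>x. c x $ i) has_derivative (\<lambda>h. Dc i x \<bullet> h)) (at x)"
    and c_hess: "\<And>i x. (Dc i has_derivative (\<lambda>h. Hc i x *v h)) (at x)"
    and lipschitz: "\<exists>r>0. \<exists>L. \<forall>x\<in>ball xs r. \<forall>x'\<in>ball xs r.
          norm (Hf x - Hf x') \<le> L * norm (x - x') \<and>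
          (\<forall>i. norm (Hc i x - Hc i x') \<le> L * norm (x - x'))"
    and KKT_stat: "Df xs - (\<Sum>i\<in>UNIV. ss$i *\<^sub>R Dc i xs) = 0"
    and KKT_feas: "\<forall>i. c xs $ i \<ge> 0"
    and KKT_dual: "\<forall>i. ss $ i \<ge> 0"
    and KKT_compl: "ss \<bullet> c xs = 0"
    and LICQ: "\<And>a. (\<Sum>i\<in>{i. c xs $ i = 0}. a i *\<^sub>R Dc i xs) = 0 \<Longrightarrow>
                  \<forall>i\<in>{i. c xs $ i = 0}. a i = 0"
    and strict_compl: "\<forall>i. ss $ i + c xs $ i > 0"
    and rho0_pos: "\<rho>0 > 0"
    and B_posdef: "\<forall>v. v \<noteq> 0 \<longrightarrow>
          v \<bullet> ((Hf xs - (\<Sum>i\<in>UNIV. ss$i *\<^sub>R Hc i xs)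
                 + \<rho>0 *\<^sub>R (\<Sum>i\<in>{i. ss$i > 0}. outer (Dc i xs))) *v v) > 0"
  shows "\<exists>\<mu>b>0. \<exists>\<epsilon>>0. \<exists>\<delta>>0.
     (let D = {(s, \<mu>). norm (s - ss) \<le> \<delta> \<and> 0 \<le> \<mu> \<and> \<mu> < \<mu>b} in
      \<exists>xf :: (real^'m) \<times> real \<Rightarrow> real^'n.
        (\<forall>(s, \<mu>)\<in>D. xf (s, \<mu>) \<in> ball xs \<epsilon> \<and>
            (\<forall>x\<in>ball xs \<epsilon>. Ffun f c (xf (s, \<mu>)) s \<mu> \<rho>0 \<le> Ffun f c x s \<mu> \<rho>0) \<and>
            (\<forall>x\<in>ball xs \<epsilon>. Ffun f c x s \<mu> \<rho>0 \<le> Ffun f c (xf (s, \<mu>)) s \<mu> \<rho>0 \<longrightarrow> x = xf (s, \<mu>)))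
        \<and> (\<exists>D' :: (real^'m) \<times> real \<Rightarrow> (((real^'m) \<times> real) \<Rightarrow>\<^sub>L (real^'n)).
              (\<forall>p\<in>interior D. (xf has_derivative blinfun_apply (D' p)) (at p))
              \<and> continuous_on (interior D) D')
        \<and> (\<exists>C>0. \<forall>(s, \<mu>)\<in>D.
              norm (xf (s, \<mu>) - xs) \<le> C * (norm (s - ss) + \<mu>) \<and>
              norm (\<rho>0 *\<^sub>R yvec c (xf (s, \<mu>)) s \<mu> \<rho>0 - ss) \<le> C * (norm (s - ss) + \<mu>)))"
proof -
  have "\<exists>r>0. \<forall>x\<in>ball xs r. isCont Hf x \<and> (\<forall>i. isCont (Hc i) x)"
  proof -
    obtain r L where "r > 0" and L: "\<forall>x\<in>ball xs r. \<forall>x'\<in>ball xs r.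
        norm (Hf x - Hf x') \<le> L * norm (x - x') \<and> (\<forall>i. norm (Hc i x - Hc i x') \<le> L * norm (x - x'))"
      using lipschitz by blast
    then have "continuous_on (ball xs r) Hf" "continuous_on (ball xs r) (Hc i)" for i
      by (auto intro!: continuous_on_if_lipschitz_bound[where L = L])
    then show ?thesis using \<open>r > 0\<close> by (auto simp: continuous_on_eq_continuous_at)
  qed
  then interpret kkt_point f c Df Hf Dc Hc xs ss \<rho>0
    using assms by unfold_locales auto
  show ?thesis by (rule local_minimizer_map)
qed

end
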